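(* Let $W$ be the affine Weyl group of an irreducible reduced crystallographic root system of rank 2, with simple generators $s_0,s_1,s_2$ and $W_0=\langle s_1,s_2\rangle$. Let $H_{r_0}$, $H_{r_1}$ be two adjacent parallel hyperplanes (i.e. $H_{\alpha,c}$ and $H_{\alpha,c+1}$ for a root $\alpha$ and $c\in\mathbb{Z}$). If both the alcove $w\in W$ and the identity alcove lie in the strip between $H_{r_0}$ and $H_{r_1}$, then $w$ is not the element of maximal length in the coset $wW_0$.
   Context: $W$ is generated by the reflections $s_{\beta;k}$ in the lines $H_{\beta,k}=\{v:\langle v,\beta\rangle=k\}$ ($\beta$ a root, $k\in\mathbb{Z}$) of a Euclidean plane; as a Coxeter group its simple generators $s_0,s_1,s_2$ are the reflections in the walls of the fundamental alcove $A_0$, with $s_0$ the reflection in the wall not through the origin; $W_0=\langle s_1,s_2\rangle$ is the finite Weyl group. Elements are identified with alcoves via $w\mapsto wA_0$. $\ell$ is Coxeter length. *)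

theory Defs
  imports "HOL-Analysis.Analysis"
begin

definition root_system :: "(real^2) set \<Rightarrow> bool" where
  "root_system R \<longleftrightarrow>
     finite R \<and> 0 \<notin> R \<and> span R = UNIV \<and>
     (\<forall>a\<in>R. \<forall>b\<in>R. b - (2 * (b \<bullet> a) / (a \<bullet> a)) *\<^sub>R a \<in> R) \<and>
     (\<forall>a\<in>R. \<forall>b\<in>R. 2 * (b \<bullet> a) / (a \<bullet> a) \<in> \<int>)"

definition reduced_rs :: "(real^2) set \<Rightarrow> bool" where
  "reduced_rs R \<longleftrightarrow> (\<forall>a\<in>R. \<forall>c::real. c *\<^sub>R a \<in> R \<longrightarrow> c = 1 \<or> c = -1)"

definition irreducible_rs :: "(real^2) set \<Rightarrow> bool" where
  "irreducible_rs R \<longleftrightarrow> \<not> (\<exists>R1 R2. R1 \<noteq> {} \<and> R2 \<noteq> {} \<and> R1 \<union> R2 = R \<and> R1 \<inter> R2 = {} \<and>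
        (\<forall>a\<in>R1. \<forall>b\<in>R2. a \<bullet> b = 0))"

definition aff_refl :: "real^2 \<Rightarrow> int \<Rightarrow> real^2 \<Rightarrow> real^2" where
  "aff_refl b k v = v - ((v \<bullet> b - of_int k) * 2 / (b \<bullet> b)) *\<^sub>R b"

text \<open>Monoid generated by a set of maps (for sets of involutions this is the generated group).\<close>
inductive_set gen_by :: "((real^2 \<Rightarrow> real^2) set) \<Rightarrow> (real^2 \<Rightarrow> real^2) set"
  for S where
  gen_id: "id \<in> gen_by S"
| gen_step: "s \<in> S \<Longrightarrow> g \<in> gen_by S \<Longrightarrow> s \<circ> g \<in> gen_by S"

definition affW :: "(real^2) set \<Rightarrow> (real^2 \<Rightarrow> real^2) set" where
  "affW R = gen_by {aff_refl b k | b k. b \<in> R}"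

definition pos_roots :: "(real^2) set \<Rightarrow> real^2 \<Rightarrow> (real^2) set" where
  "pos_roots R xi = {b \<in> R. b \<bullet> xi > 0}"

definition A0 :: "(real^2) set \<Rightarrow> real^2 \<Rightarrow> (real^2) set" where
  "A0 R xi = {v. \<forall>b\<in>pos_roots R xi. 0 < v \<bullet> b \<and> v \<bullet> b < 1}"

definition is_wall :: "(real^2) set \<Rightarrow> real^2 \<Rightarrow> int \<Rightarrow> bool" where
  "is_wall A b k \<longleftrightarrow> (\<exists>p e. p \<bullet> b = of_int k \<and> e > 0 \<and>
      ({v \<in> ball p e. v \<bullet> b < of_int k} \<subseteq> A \<or> {v \<in> ball p e. v \<bullet> b > of_int k} \<subseteq> A))"

definition simple_gens :: "(real^2) set \<Rightarrow> real^2 \<Rightarrow> (real^2 \<Rightarrow> real^2) set" where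
  "simple_gens R xi = {aff_refl b k | b k. b \<in> R \<and> is_wall (A0 R xi) b k}"

definition W0 :: "(real^2) set \<Rightarrow> real^2 \<Rightarrow> (real^2 \<Rightarrow> real^2) set" where
  "W0 R xi = gen_by {aff_refl b 0 | b. b \<in> R \<and> is_wall (A0 R xi) b 0}"

definition clen :: "(real^2) set \<Rightarrow> real^2 \<Rightarrow> (real^2 \<Rightarrow> real^2) \<Rightarrow> nat" where
  "clen R xi w = (LEAST n. \<exists>ss. length ss = n \<and> set ss \<subseteq> simple_gens R xi \<and> foldr (\<circ>) ss id = w)"

definition strip :: "real^2 \<Rightarrow> int \<Rightarrow> (real^2) set" where
  "strip a c = {v. of_int c < v \<bullet> a \<and> v \<bullet> a < of_int c + 1}"

end

theory Submission
  imports Defs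
begin

text \<open>The Coxeter length of \<open>w\<close> is the number of lines \<open>H(\<beta>, k)\<close> separating the alcove
  \<open>A0\<close> from \<open>w A0\<close>: a word in the simple reflections crosses each such line, and a word
  crossing a line twice can be shortened by the exchange argument. (This needs every affine
  reflection to be a word, which follows by descending from an arbitrary alcove to \<open>A0\<close>
  through walls.) Hence \<open>\<ell>(w s) > \<ell>(w)\<close> for a simple reflection \<open>s \<in> W0\<close> exactly when the
  \<open>w\<close>-image of the wall of \<open>s\<close> does not separate \<open>A0\<close> from \<open>w A0\<close>.

  The vertex \<open>w 0\<close> of \<open>w A0\<close> satisfies \<open>w 0 \<bullet> \<alpha> \<in> \<int>\<close>, and \<open>w 0 \<bullet> \<alpha> \<in> [c, c + 1]\<close> because
  \<open>w A0\<close> lies in the strip; so the line \<open>H(\<alpha>, w 0 \<bullet> \<alpha>)\<close> through \<open>w 0\<close> has \<open>A0\<close> and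
  \<open>w A0\<close> on the same side, say the positive one. If \<open>w\<close> were longest in \<open>w W0\<close>, the image
  of every wall of the fundamental chamber \<open>C\<close> would separate \<open>A0\<close> from \<open>w A0\<close>, which puts
  \<open>A0 - w 0\<close> into \<open>L (- closure C)\<close>, \<open>L\<close> the linear part of \<open>w\<close>. But \<open>L\<^sup>-\<^sup>1 \<alpha>\<close> is a positive
  root, since \<open>w A0\<close> lies above the line, so \<open>L (- closure C)\<close> lies below it, while \<open>A0\<close> lies
  above it.\<close>

section \<open>Reflections and separation by oriented lines\<close>

text \<open>A pair \<open>h = (c, j)\<close> stands for the line \<open>{v. v \<bullet> c = j}\<close>, oriented so that
  its negative side is \<open>{v. v \<bullet> c < j}\<close>; \<open>h\<close> and \<open>- h\<close> are the same line with opposite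
  orientations.\<close>

definition reflect :: "'a::real_inner \<times> real \<Rightarrow> 'a \<Rightarrow> 'a" where
  "reflect h v = v - ((v \<bullet> fst h - snd h) * 2 / (fst h \<bullet> fst h)) *\<^sub>R fst h"

lemma aff_refl_eq_reflect: "aff_refl b k = reflect (b, of_int k)"
  by (simp add: fun_eq_iff aff_refl_def reflect_def)

lemma reflect_inner: "fst h \<noteq> 0 \<Longrightarrow> reflect h v \<bullet> fst h = 2 * snd h - v \<bullet> fst h"
  by (simp add: reflect_def inner_diff_left field_simps)

lemma reflect_reflect [simp]:
  assumes "fst h \<noteq> 0" shows "reflect h (reflect h v) = v"
proof -
  have "(reflect h v \<bullet> fst h - snd h) * 2 / (fst h \<bullet> fst h)
      = - ((v \<bullet> fst h - snd h) * 2 / (fst h \<bullet> fst h))"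
    using assms by (simp add: reflect_inner field_simps)
  then show ?thesis by (simp add: reflect_def[of h "reflect h v"]) (simp add: reflect_def)
qed

lemma reflect_uminus [simp]: "reflect (- h) = reflect h"
proof
  fix v
  have "(v \<bullet> fst (- h) - snd (- h)) * 2 / (fst (- h) \<bullet> fst (- h))
      = - ((v \<bullet> fst h - snd h) * 2 / (fst h \<bullet> fst h))"
    by (simp add: minus_divide_left algebra_simps)
  then show "reflect (- h) v = reflect h v"
    by (simp only: reflect_def) simp
qed

lemma reflect_fixed: "v \<bullet> fst h = snd h \<Longrightarrow> reflect h v = v"
  by (simp add: reflect_def)

definition lin_part :: "('a::real_vector \<Rightarrow> 'a) \<Rightarrow> 'a \<Rightarrow> 'a" where
  "lin_part g v = g v - g 0"

lemma lin_part_decomp: "g v = lin_part g v + g 0"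
  by (simp add: lin_part_def)

lemma lin_part_id [simp]: "lin_part id = id"
  by (simp add: fun_eq_iff lin_part_def)

lemma lin_part_comp:
  assumes "linear (lin_part g)" shows "lin_part (g \<circ> f) = lin_part g \<circ> lin_part f"
proof
  fix v
  have "lin_part (g \<circ> f) v = lin_part g (f v) - lin_part g (f 0)"
    by (simp add: lin_part_def)
  also have "\<dots> = lin_part g (f v - f 0)"
    using linear_diff[OF assms] by simp
  finally show "lin_part (g \<circ> f) v = (lin_part g \<circ> lin_part f) v"
    by (simp add: lin_part_def)
qed

lemma lin_part_reflect: "lin_part (reflect h) = reflect (fst h, 0)"
  by (simp add: fun_eq_iff lin_part_def reflect_def diff_divide_distrib algebra_simps)

lemma orthogonal_transformation_reflect:
  fixes b :: "'a::real_inner"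
  assumes "b \<noteq> 0" shows "orthogonal_transformation (reflect (b, 0))"
proof -
  have "linear (reflect (b, 0))"
    by (rule linearI) (simp_all add: reflect_def inner_add_left add_divide_distrib algebra_simps)
  moreover have "reflect (b, 0) v \<bullet> reflect (b, 0) u = v \<bullet> u" for u v
    using assms
    by (simp add: reflect_def inner_diff_left inner_diff_right inner_commute field_simps)
  ultimately show ?thesis
    unfolding orthogonal_transformation_def by blast
qed

lemma dist_reflect:
  assumes "fst h \<noteq> 0" shows "dist (reflect h u) (reflect h v) = dist u v"
proof -
  have "reflect h u - reflect h v = reflect (fst h, 0) (u - v)"
    by (simp add: reflect_def algebra_simps diff_divide_distrib inner_diff_left)
  then show ?thesis
    using orthogonal_transformation_norm[OF orthogonal_transformation_reflect[OF assms]]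
    by (simp add: dist_norm)
qed

lemma reflect_half_ball:
  assumes b: "b \<noteq> 0" and p: "p \<bullet> b = k"
  shows "reflect (b, k) ` {v \<in> ball p e. v \<bullet> b < k} = {v \<in> ball p e. v \<bullet> b > k}"
proof -
  have fixed: "reflect (b, k) p = p"
    using p by (simp add: reflect_fixed)
  have side: "reflect (b, k) v \<bullet> b = 2 * k - v \<bullet> b" for v
    using reflect_inner[of "(b, k)"] b by simp
  have maps: "reflect (b, k) v \<in> {v \<in> ball p e. v \<bullet> b > k}" if "v \<in> ball p e" "v \<bullet> b < k" for v
    using that dist_reflect[of "(b, k)" p v] fixed b by (simp add: side)
  have "v \<in> reflect (b, k) ` {v \<in> ball p e. v \<bullet> b < k}" if "v \<in> ball p e" "v \<bullet> b > k" for v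
  proof (rule image_eqI)
    show "v = reflect (b, k) (reflect (b, k) v)"
      using b by simp
    show "reflect (b, k) v \<in> {v \<in> ball p e. v \<bullet> b < k}"
      using that dist_reflect[of "(b, k)" p v] fixed b by (simp add: side)
  qed
  with maps show ?thesis by blast
qed

definition hyp_below :: "'a::real_inner set \<Rightarrow> 'a \<times> real \<Rightarrow> bool" where
  "hyp_below A h \<longleftrightarrow> (\<forall>v\<in>A. v \<bullet> fst h < snd h)"

definition hyp_above :: "'a::real_inner set \<Rightarrow> 'a \<times> real \<Rightarrow> bool" where
  "hyp_above A h \<longleftrightarrow> (\<forall>v\<in>A. v \<bullet> fst h > snd h)"

definition separates :: "'a::real_inner \<times> real \<Rightarrow> 'a set \<Rightarrow> 'a set \<Rightarrow> bool" where
  "separates h A B \<longleftrightarrow> hyp_below A h \<and> hyp_above B h \<or> hyp_above A h \<and> hyp_below B h"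

lemma hyp_below_uminus [simp]: "hyp_below A (- h) \<longleftrightarrow> hyp_above A h"
  by (auto simp: hyp_below_def hyp_above_def)

lemma hyp_above_uminus [simp]: "hyp_above A (- h) \<longleftrightarrow> hyp_below A h"
  by (auto simp: hyp_below_def hyp_above_def)

lemma separates_uminus [simp]: "separates (- h) A B \<longleftrightarrow> separates h A B"
  by (auto simp: separates_def)

lemma separates_commute: "separates h A B \<longleftrightarrow> separates h B A"
  by (auto simp: separates_def)

lemma separates_mono: "separates h A B \<Longrightarrow> A' \<subseteq> A \<Longrightarrow> B' \<subseteq> B \<Longrightarrow> separates h A' B'"
  unfolding separates_def hyp_below_def hyp_above_def by blast

lemma not_hyp_below_and_above: "A \<noteq> {} \<Longrightarrow> hyp_below A h \<Longrightarrow> \<not> hyp_above A h"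
  unfolding hyp_below_def hyp_above_def by (metis all_not_in_conv less_asym)

lemma separates_iff_xor:
  assumes "A \<noteq> {}" "B \<noteq> {}" "C \<noteq> {}"
    and "hyp_below A h \<or> hyp_above A h" "hyp_below B h \<or> hyp_above B h"
    and "hyp_below C h \<or> hyp_above C h"
  shows "separates h A C \<longleftrightarrow> (separates h A B \<longleftrightarrow> \<not> separates h B C)"
  using assms not_hyp_below_and_above[of A h] not_hyp_below_and_above[of B h]
    not_hyp_below_and_above[of C h]
  unfolding separates_def by blast

section \<open>Symmetries of the line arrangement\<close>

definition hyps :: "'a set \<Rightarrow> ('a \<times> real) set" where
  "hyps R = {h. fst h \<in> R \<and> snd h \<in> \<int>}"

lemma neq_uminus_if_fst_nonzero:
  fixes h :: "'a::real_vector \<times> 'b::ab_group_add"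
  assumes "fst h \<noteq> 0" shows "h \<noteq> - h"
proof
  assume "h = - h"
  then have "2 *\<^sub>R fst h = 0"
    by (metis fst_uminus add.right_inverse scaleR_2)
  with assms show False by simp
qed

definition hyp_symmetry :: "'a::euclidean_space set \<Rightarrow> ('a \<Rightarrow> 'a) \<Rightarrow> bool" where
  "hyp_symmetry R g \<longleftrightarrow>
     orthogonal_transformation (lin_part g) \<and> lin_part g ` R = R \<and> (\<forall>c\<in>R. g 0 \<bullet> c \<in> \<int>)"

text \<open>If \<open>g\<close> is an affine isometry, \<open>hyp_image g h\<close> is the line \<open>g ` {v. v \<bullet> fst h = snd h}\<close>,
  with the orientation transported by \<open>g\<close>.\<close>

definition hyp_image :: "('a::real_inner \<Rightarrow> 'a) \<Rightarrow> 'a \<times> real \<Rightarrow> 'a \<times> real" where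
  "hyp_image g h = (lin_part g (fst h), snd h + g 0 \<bullet> lin_part g (fst h))"

lemma hyp_symmetry_id: "hyp_symmetry R id"
  unfolding hyp_symmetry_def lin_part_id by (simp add: id_def)

context
  fixes R :: "'a::euclidean_space set" and g :: "'a \<Rightarrow> 'a"
  assumes g: "hyp_symmetry R g"
begin

lemma hyp_symmetry_linear: "linear (lin_part g)"
  using g by (simp add: hyp_symmetry_def orthogonal_transformation_def)

lemma hyp_symmetry_inner: "lin_part g u \<bullet> lin_part g v = u \<bullet> v"
  using g by (simp add: hyp_symmetry_def orthogonal_transformation_def)

lemma hyp_symmetry_diff: "g u - g v = lin_part g (u - v)"
  using lin_part_decomp[of g] linear_diff[OF hyp_symmetry_linear] by (metis add_diff_cancel_right)

lemma hyp_symmetry_dist: "dist (g u) (g v) = dist u v"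
proof -
  have "orthogonal_transformation (lin_part g)"
    using g by (simp add: hyp_symmetry_def)
  then show ?thesis
    by (simp add: dist_norm hyp_symmetry_diff orthogonal_transformation_norm)
qed

lemma hyp_symmetry_surj: "surj g"
proof -
  have "surj (lin_part g)"
    using g orthogonal_transformation_surj by (auto simp: hyp_symmetry_def)
  then show ?thesis
    unfolding surj_def by (metis lin_part_decomp diff_add_cancel)
qed

lemma hyp_symmetry_comp:
  assumes f: "hyp_symmetry R f" shows "hyp_symmetry R (g \<circ> f)"
proof -
  have lc: "lin_part (g \<circ> f) = lin_part g \<circ> lin_part f"
    using lin_part_comp hyp_symmetry_linear by blast
  have "(g \<circ> f) 0 \<bullet> c \<in> \<int>" if c: "c \<in> R" for c
  proof -
    obtain c' where c': "c' \<in> R" "c = lin_part g c'"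
      using g c by (auto simp: hyp_symmetry_def)
    have "(g \<circ> f) 0 \<bullet> c = f 0 \<bullet> c' + g 0 \<bullet> c"
      using lin_part_decomp[of g "f 0"] c' by (simp add: inner_add_left hyp_symmetry_inner)
    then show ?thesis
      using f g c c' by (simp add: hyp_symmetry_def)
  qed
  moreover have "lin_part (g \<circ> f) ` R = R"
    using g f unfolding lc image_comp[symmetric] by (simp add: hyp_symmetry_def)
  moreover have "orthogonal_transformation (lin_part (g \<circ> f))"
    using g f orthogonal_transformation_compose unfolding lc by (auto simp: hyp_symmetry_def)
  ultimately show ?thesis
    by (simp add: hyp_symmetry_def)
qed

lemma hyp_image_hyps: "hyp_image g ` hyps R = hyps R"
proof
  show "hyp_image g ` hyps R \<subseteq> hyps R"
  proof
    fix h' assume "h' \<in> hyp_image g ` hyps R"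
    then obtain h where h: "h \<in> hyps R" "h' = hyp_image g h" by blast
    then have "lin_part g (fst h) \<in> R"
      using g by (auto simp: hyp_symmetry_def hyps_def)
    then show "h' \<in> hyps R"
      using g h by (auto simp: hyp_symmetry_def hyp_image_def hyps_def)
  qed
  show "hyps R \<subseteq> hyp_image g ` hyps R"
  proof
    fix h assume h: "h \<in> hyps R"
    then obtain c' where c': "c' \<in> R" "fst h = lin_part g c'"
      using g by (force simp: hyp_symmetry_def hyps_def)
    have "g 0 \<bullet> fst h \<in> \<int>"
      using g h by (simp add: hyp_symmetry_def hyps_def)
    then have "(c', snd h - g 0 \<bullet> fst h) \<in> hyps R"
      using h c' by (simp add: hyps_def)
    moreover have "h = hyp_image g (c', snd h - g 0 \<bullet> fst h)"
      using c' by (simp add: hyp_image_def prod_eq_iff)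
    ultimately show "h \<in> hyp_image g ` hyps R" by blast
  qed
qed

lemma hyp_image_side: "g v \<bullet> fst (hyp_image g h) - snd (hyp_image g h) = v \<bullet> fst h - snd h"
  using lin_part_decomp[of g v] by (simp add: hyp_image_def inner_add_left hyp_symmetry_inner)

lemma hyp_image_uminus: "hyp_image g (- h) = - hyp_image g h"
  using linear_neg[OF hyp_symmetry_linear] by (simp add: hyp_image_def)

lemma inj_hyp_image: "inj (hyp_image g)"
proof
  fix h1 h2 assume e: "hyp_image g h1 = hyp_image g h2"
  have "inj (lin_part g)"
    using g orthogonal_transformation_inj by (auto simp: hyp_symmetry_def)
  then have "fst h1 = fst h2"
    using e by (simp add: hyp_image_def inj_def)
  then show "h1 = h2"
    using e by (simp add: hyp_image_def prod_eq_iff)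
qed

lemma hyp_symmetry_conj_reflect: "g \<circ> reflect h = reflect (hyp_image g h) \<circ> g"
proof
  fix v
  let ?L = "lin_part g"
  define t where "t = (v \<bullet> fst h - snd h) * 2 / (fst h \<bullet> fst h)"
  have "t = (g v \<bullet> fst (hyp_image g h) - snd (hyp_image g h)) * 2
              / (fst (hyp_image g h) \<bullet> fst (hyp_image g h))"
    by (simp add: t_def hyp_image_side) (simp add: hyp_image_def hyp_symmetry_inner)
  then have "reflect (hyp_image g h) (g v) = g v - t *\<^sub>R ?L (fst h)"
    by (simp add: reflect_def hyp_image_def)
  also have "\<dots> = ?L (v - t *\<^sub>R fst h) + g 0"
    using lin_part_decomp[of g v] linear_diff[OF hyp_symmetry_linear]
      linear_scale[OF hyp_symmetry_linear] by simp
  also have "\<dots> = g (reflect h v)"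
    unfolding reflect_def t_def by (rule lin_part_decomp[symmetric])
  finally show "(g \<circ> reflect h) v = (reflect (hyp_image g h) \<circ> g) v" by simp
qed

lemma hyp_image_less_iff: "g v \<bullet> fst (hyp_image g h) < snd (hyp_image g h) \<longleftrightarrow> v \<bullet> fst h < snd h"
  using hyp_image_side[of v h] by linarith

lemma hyp_image_greater_iff: "g v \<bullet> fst (hyp_image g h) > snd (hyp_image g h) \<longleftrightarrow> v \<bullet> fst h > snd h"
  using hyp_image_side[of v h] by linarith

lemma hyp_below_image: "hyp_below (g ` A) (hyp_image g h) \<longleftrightarrow> hyp_below A h"
  by (simp add: hyp_below_def hyp_image_less_iff)

lemma hyp_above_image: "hyp_above (g ` A) (hyp_image g h) \<longleftrightarrow> hyp_above A h"
  by (simp add: hyp_above_def hyp_image_greater_iff)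

lemma separates_image: "separates (hyp_image g h) (g ` A) (g ` B) \<longleftrightarrow> separates h A B"
  by (simp add: separates_def hyp_below_image hyp_above_image)

end

section \<open>Plane geometry and systems of strict inequalities\<close>

lemma affine_lower_bound_at_0:
  fixes l \<alpha> \<beta> \<epsilon> :: real
  assumes "\<epsilon> > 0" and bound: "\<And>t. 0 < t \<Longrightarrow> t \<le> \<epsilon> \<Longrightarrow> l < \<alpha> + t * \<beta>"
  shows "l \<le> \<alpha>"
proof (rule ccontr)
  assume "\<not> l \<le> \<alpha>"
  define t where "t = min \<epsilon> ((l - \<alpha>) / (\<bar>\<beta>\<bar> + 1))"
  have t: "0 < t" "t \<le> \<epsilon>"
    using assms \<open>\<not> l \<le> \<alpha>\<close> by (simp_all add: t_def)
  have "t \<le> (l - \<alpha>) / (\<bar>\<beta>\<bar> + 1)"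
    by (simp add: t_def)
  then have "t * (\<bar>\<beta>\<bar> + 1) \<le> l - \<alpha>"
    by (simp add: pos_le_divide_eq)
  moreover have "t * \<beta> \<le> t * \<bar>\<beta>\<bar>"
    using t by (simp add: mult_left_mono)
  ultimately show False
    using bound[OF t] t(1) by (simp add: distrib_left)
qed

lemma strictly_between_ints:
  fixes x :: real and m n :: int
  assumes "of_int m < x" "x < of_int m + 1"
  shows "x < of_int n \<longleftrightarrow> m < n" and "x \<noteq> of_int n"
proof -
  show "x < of_int n \<longleftrightarrow> m < n"
  proof
    assume "x < of_int n"
    then show "m < n"
      using assms(1) by linarith
  next
    assume "m < n"
    then have "of_int m + 1 \<le> (of_int n :: real)"
      by linarith
    then show "x < of_int n"
      using assms(2) by linarith
  qed
  show "x \<noteq> of_int n"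
  proof
    assume "x = of_int n"
    then have "of_int m < (of_int n :: real)" "(of_int n :: real) < of_int (m + 1)"
      using assms by simp_all
    then show False
      unfolding of_int_less_iff by linarith
  qed
qed

lemma on_hyperplane_if_halfspaces_agree:
  fixes b c p u :: "'a::real_inner"
  assumes b: "b \<noteq> 0" and u: "u \<in> ball p e" "u \<bullet> b = k"
    and lt: "\<forall>v\<in>ball p e. v \<bullet> b < k \<longrightarrow> v \<bullet> c < j"
    and gt: "\<forall>v\<in>ball p e. v \<bullet> b > k \<longrightarrow> v \<bullet> c > j"
  shows "u \<bullet> c = j"
proof -
  obtain r where r: "r > 0" "ball u r \<subseteq> ball p e"
    using u open_contains_ball[of "ball p e"] by blast
  define \<epsilon> where "\<epsilon> = r / (2 * norm b)"
  have \<epsilon>: "\<epsilon> > 0"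
    using r b by (simp add: \<epsilon>_def)
  have near: "u + s *\<^sub>R b \<in> ball p e" if "\<bar>s\<bar> \<le> \<epsilon>" for s
  proof -
    have "\<bar>s\<bar> * norm b \<le> r / 2"
      using that b by (simp add: \<epsilon>_def pos_le_divide_eq mult.commute)
    then have "u + s *\<^sub>R b \<in> ball u r"
      using r by (simp add: dist_norm)
    then show ?thesis
      using r by blast
  qed
  have "j \<le> u \<bullet> c"
  proof (rule affine_lower_bound_at_0[OF \<epsilon>])
    fix t :: real assume t: "0 < t" "t \<le> \<epsilon>"
    have "(u + t *\<^sub>R b) \<bullet> b > k"
      using b t u by (simp add: inner_add_left)
    then have "(u + t *\<^sub>R b) \<bullet> c > j"
      using gt near[of t] t by auto
    then show "j < u \<bullet> c + t * (b \<bullet> c)"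
      by (simp add: inner_add_left)
  qed
  moreover have "- j \<le> - (u \<bullet> c)"
  proof (rule affine_lower_bound_at_0[OF \<epsilon>])
    fix t :: real assume t: "0 < t" "t \<le> \<epsilon>"
    have "(u - t *\<^sub>R b) \<bullet> b < k"
      using b t u by (simp add: inner_diff_left)
    then have "(u - t *\<^sub>R b) \<bullet> c < j"
      using lt near[of "- t"] t by auto
    then show "- j < - (u \<bullet> c) + t * (b \<bullet> c)"
      by (simp add: inner_diff_left)
  qed
  ultimately show ?thesis by linarith
qed

lemma separates_half_balls_imp_on_hyperplane:
  fixes b c p u :: "'a::real_inner"
  assumes b: "b \<noteq> 0" and u: "u \<in> ball p e" "u \<bullet> b = k"
    and sep: "separates (c, j) {v \<in> ball p e. v \<bullet> b < k} {v \<in> ball p e. v \<bullet> b > k}"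
  shows "u \<bullet> c = j"
  using sep unfolding separates_def
proof
  assume "hyp_below {v \<in> ball p e. v \<bullet> b < k} (c, j) \<and> hyp_above {v \<in> ball p e. v \<bullet> b > k} (c, j)"
  then show ?thesis
    by (intro on_hyperplane_if_halfspaces_agree[OF b u]) (auto simp: hyp_below_def hyp_above_def)
next
  assume "hyp_above {v \<in> ball p e. v \<bullet> b < k} (c, j) \<and> hyp_below {v \<in> ball p e. v \<bullet> b > k} (c, j)"
  then have "u \<bullet> (- c) = - j"
    by (intro on_hyperplane_if_halfspaces_agree[OF b u]) (auto simp: hyp_below_def hyp_above_def)
  then show ?thesis by simp
qed

definition rot90 :: "real^2 \<Rightarrow> real^2" where
  "rot90 b = vector [- b$2, b$1]"

lemma rot90_inner_self: "rot90 b \<bullet> b = 0"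
  by (simp add: rot90_def inner_vec_def sum_2)

lemma norm_rot90: "norm (rot90 b) = norm b"
  by (simp add: rot90_def inner_vec_def sum_2 norm_eq_sqrt_inner algebra_simps)

lemma orthogonal_rot90_imp_parallel:
  assumes b: "b \<noteq> 0" and "rot90 b \<bullet> c = 0"
  shows "c = ((c \<bullet> b) / (b \<bullet> b)) *\<^sub>R b"
proof -
  have d: "b$1 * c$2 = b$2 * c$1"
    using assms(2) by (simp add: rot90_def inner_vec_def sum_2)
  have "c$i * (b \<bullet> b) = (c \<bullet> b) * b$i" for i
  proof (cases "i = 1")
    case True
    then show ?thesis
      using d by (simp add: inner_vec_def sum_2 algebra_simps)
  next
    case False
    then have "i = 2"
      using exhaust_2[of i] by blast
    then show ?thesis
      using d by (simp add: inner_vec_def sum_2 algebra_simps)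
  qed
  then show ?thesis
    using b by (simp add: vec_eq_iff field_simps)
qed

definition halfspaces_le :: "('a::real_inner \<times> real) set \<Rightarrow> 'a set" where
  "halfspaces_le P = {v. \<forall>h\<in>P. v \<bullet> fst h \<le> snd h}"

definition halfspaces_lt :: "('a::real_inner \<times> real) set \<Rightarrow> 'a set" where
  "halfspaces_lt P = {v. \<forall>h\<in>P. v \<bullet> fst h < snd h}"

lemma open_halfspaces_lt: "finite P \<Longrightarrow> open (halfspaces_lt P)"
proof -
  have "halfspaces_lt P = (\<Inter>h\<in>P. {v. fst h \<bullet> v < snd h})"
    by (auto simp: halfspaces_lt_def inner_commute)
  then show "finite P \<Longrightarrow> ?thesis"
    by (simp add: open_INT open_halfspace_lt)
qed

lemma open_subset_halfspaces_le_imp_lt: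
  assumes "\<forall>h\<in>P. fst h \<noteq> 0" and "open U" and "U \<subseteq> halfspaces_le P"
  shows "U \<subseteq> halfspaces_lt P"
proof -
  have "U \<subseteq> {v. fst h \<bullet> v < snd h}" if h: "h \<in> P" for h
  proof -
    have "U \<subseteq> {v. fst h \<bullet> v \<le> snd h}"
      using assms(3) h by (auto simp: halfspaces_le_def inner_commute)
    then have "U \<subseteq> interior {v. fst h \<bullet> v \<le> snd h}"
      using assms(2) by (rule interior_maximal)
    then show ?thesis
      using assms(1) h by simp
  qed
  then show ?thesis
    by (auto simp: halfspaces_lt_def inner_commute)
qed

definition has_facet :: "'a::real_inner set \<Rightarrow> 'a \<times> real \<Rightarrow> bool" where
  "has_facet A h \<longleftrightarrow>
     (\<exists>p e. p \<bullet> fst h = snd h \<and> e > 0 \<and> {v \<in> ball p e. v \<bullet> fst h < snd h} \<subseteq> A)"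

lemma is_wall_if_has_facet: "has_facet A (b, of_int k) \<Longrightarrow> is_wall A b k"
  by (auto simp: has_facet_def is_wall_def)

lemma has_facet_mono: "has_facet A h \<Longrightarrow> A \<subseteq> B \<Longrightarrow> has_facet B h"
  unfolding has_facet_def by blast

lemma has_facet_insert:
  fixes c :: "'a::real_inner"
  assumes fin: "finite Q" and x0: "x0 \<in> halfspaces_lt (insert (c, j) Q)"
    and z: "z \<in> halfspaces_le Q" "z \<bullet> c > j"
  shows "has_facet (halfspaces_lt (insert (c, j) Q)) (c, j)"
proof -
  have x0c: "x0 \<bullet> c < j"
    using x0 by (simp add: halfspaces_lt_def)
  define t where "t = (j - x0 \<bullet> c) / (z \<bullet> c - x0 \<bullet> c)"
  have t: "0 < t" "t < 1"
    using z(2) x0c by (simp_all add: t_def field_simps)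
  define p where "p = x0 + t *\<^sub>R (z - x0)"
  have pc: "p \<bullet> c = j"
    using z(2) x0c by (simp add: p_def t_def inner_add_left inner_diff_left)
  have "p \<in> halfspaces_lt Q"
    unfolding halfspaces_lt_def
  proof (intro CollectI ballI)
    fix h assume h: "h \<in> Q"
    have "x0 \<bullet> fst h < snd h" "z \<bullet> fst h \<le> snd h"
      using x0 z(1) h by (auto simp: halfspaces_lt_def halfspaces_le_def)
    then have "(1 - t) * (x0 \<bullet> fst h) + t * (z \<bullet> fst h) < (1 - t) * snd h + t * snd h"
      using t by (intro add_less_le_mono mult_strict_left_mono mult_left_mono) auto
    then show "p \<bullet> fst h < snd h"
      by (simp add: p_def inner_add_left inner_diff_left algebra_simps)
  qed
  then obtain e where e: "e > 0" "ball p e \<subseteq> halfspaces_lt Q"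
    using open_halfspaces_lt[OF fin] open_contains_ball by blast
  then have "{v \<in> ball p e. v \<bullet> c < j} \<subseteq> halfspaces_lt (insert (c, j) Q)"
    by (auto simp: halfspaces_lt_def)
  then show ?thesis
    using pc e(1) by (auto simp: has_facet_def)
qed

lemma halfspaces_lt_subset_le: "halfspaces_lt P \<subseteq> halfspaces_le P"
  by (auto simp: halfspaces_lt_def halfspaces_le_def less_imp_le)

lemma irredundant_subsystem:
  fixes P :: "('a::real_inner \<times> real) set"
  assumes fin: "finite P" and nz: "\<forall>h\<in>P. fst h \<noteq> 0" and x0: "x0 \<in> halfspaces_lt P"
  obtains F where "F \<subseteq> P" "halfspaces_le F \<subseteq> halfspaces_le P"
    "\<And>h. h \<in> F \<Longrightarrow> has_facet (halfspaces_lt P) h"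
proof -
  let ?Q = "\<lambda>F. F \<subseteq> P \<and> halfspaces_le F \<subseteq> halfspaces_le P"
  obtain F where F: "?Q F" and Fmin: "\<And>F'. ?Q F' \<Longrightarrow> card F \<le> card F'"
    using ex_has_least_nat[of ?Q P card] by blast
  have finF: "finite F"
    using F fin finite_subset by blast
  have "has_facet (halfspaces_lt P) h" if h: "h \<in> F" for h
  proof -
    obtain c j where hcj: "h = (c, j)" by fastforce
    have "\<not> ?Q (F - {h})"
      using Fmin card_Diff1_less[OF finF h] by (meson not_le)
    then obtain z where z: "z \<in> halfspaces_le (F - {h})" "z \<notin> halfspaces_le F"
      using F by blast
    then have "\<not> z \<bullet> fst h \<le> snd h"
      unfolding halfspaces_le_def by blast
    then have "z \<bullet> c > j"
      using hcj by simp
    moreover have "F = insert (c, j) (F - {h})"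
      using h hcj by blast
    moreover have "x0 \<in> halfspaces_lt F"
      using x0 F by (auto simp: halfspaces_lt_def)
    ultimately have "has_facet (halfspaces_lt F) h"
      using has_facet_insert[of "F - {h}" x0 c j z] finF z(1) hcj by simp
    moreover have "halfspaces_lt F \<subseteq> halfspaces_lt P"
      using open_subset_halfspaces_le_imp_lt[OF nz open_halfspaces_lt[OF finF]]
        halfspaces_lt_subset_le[of F] F by blast
    ultimately show ?thesis
      using has_facet_mono by blast
  qed
  then show ?thesis
    using F that by blast
qed

definition comp_list :: "('a \<Rightarrow> 'a) list \<Rightarrow> 'a \<Rightarrow> 'a" where
  "comp_list fs = foldr (\<circ>) fs id"

lemma comp_list_Nil [simp]: "comp_list [] = id"
  by (simp add: comp_list_def)

lemma comp_list_Cons [simp]: "comp_list (f # fs) = f \<circ> comp_list fs"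
  by (simp add: comp_list_def)

lemma comp_list_append [simp]: "comp_list (fs @ gs) = comp_list fs \<circ> comp_list gs"
  by (induction fs) auto

lemma mem_gen_by_iff: "g \<in> gen_by S \<longleftrightarrow> (\<exists>ss. set ss \<subseteq> S \<and> comp_list ss = g)"
proof
  show "g \<in> gen_by S \<Longrightarrow> \<exists>ss. set ss \<subseteq> S \<and> comp_list ss = g"
  proof (induction rule: gen_by.induct)
    case gen_id
    show ?case
      by (intro exI[of _ "[]"]) simp
  next
    case (gen_step s g)
    then obtain ss where "set ss \<subseteq> S" "comp_list ss = g" by blast
    with gen_step.hyps show ?case
      by (intro exI[of _ "s # ss"]) simp
  qed
  show "\<exists>ss. set ss \<subseteq> S \<and> comp_list ss = g \<Longrightarrow> g \<in> gen_by S"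
  proof (elim exE conjE)
    fix ss assume "set ss \<subseteq> S" "comp_list ss = g"
    then show "g \<in> gen_by S"
      by (induction ss arbitrary: g) (auto intro: gen_by.intros)
  qed
qed

lemma gen_by_comp: "f \<in> gen_by S \<Longrightarrow> g \<in> gen_by S \<Longrightarrow> f \<circ> g \<in> gen_by S"
  by (induction rule: gen_by.induct) (auto simp: comp_assoc intro: gen_by.intros)

lemma gen_by_generator: "s \<in> S \<Longrightarrow> s \<in> gen_by S"
  using gen_by.gen_step[OF _ gen_by.gen_id] by fastforce

lemma clen_Least:
  "clen R xi x = (LEAST n. \<exists>ss. length ss = n \<and> set ss \<subseteq> simple_gens R xi \<and> comp_list ss = x)"
  by (simp add: clen_def comp_list_def)

lemma card_sym_diff_le:
  assumes "finite A" "finite B" shows "card (sym_diff A B) \<le> card A + card B"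
proof -
  have "card (sym_diff A B) \<le> card (A - B) + card (B - A)"
    by (rule card_Un_le)
  also have "\<dots> \<le> card A + card B"
    using assms by (intro add_mono card_mono) auto
  finally show ?thesis .
qed

section \<open>The fundamental alcove and its walls\<close>

locale affine_weyl =
  fixes R :: "(real^2) set" and xi :: "real^2"
  assumes root_system: "root_system R" and reduced: "reduced_rs R"
    and regular: "\<forall>b\<in>R. b \<bullet> xi \<noteq> 0"
begin

lemma finite_roots: "finite R"
  using root_system by (simp add: root_system_def)

lemma root_nonzero: "b \<in> R \<Longrightarrow> b \<noteq> 0"
  using root_system by (auto simp: root_system_def)

lemma root_reflect: "a \<in> R \<Longrightarrow> b \<in> R \<Longrightarrow> b - (2 * (b \<bullet> a) / (a \<bullet> a)) *\<^sub>R a \<in> R"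
  using root_system by (simp add: root_system_def)

lemma root_cartan_int: "a \<in> R \<Longrightarrow> b \<in> R \<Longrightarrow> 2 * (b \<bullet> a) / (a \<bullet> a) \<in> \<int>"
  using root_system by (simp add: root_system_def)

lemma root_uminus: "b \<in> R \<Longrightarrow> - b \<in> R"
  using root_reflect[of b b] root_nonzero[of b] by (simp add: scaleR_2)

lemma root_multiple: "b \<in> R \<Longrightarrow> c *\<^sub>R b \<in> R \<Longrightarrow> c = 1 \<or> c = -1"
  using reduced by (auto simp: reduced_rs_def)

lemma hyps_uminus: "h \<in> hyps R \<Longrightarrow> - h \<in> hyps R"
  by (simp add: hyps_def root_uminus)

lemma hyps_fst_nonzero: "h \<in> hyps R \<Longrightarrow> fst h \<noteq> 0"
  by (simp add: hyps_def root_nonzero)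

lemma hyp_symmetry_reflect:
  assumes h: "h \<in> hyps R" shows "hyp_symmetry R (reflect h)"
proof -
  have b: "fst h \<in> R" "fst h \<noteq> 0"
    using h by (simp_all add: hyps_def root_nonzero)
  have refl_R: "reflect (fst h, 0) ` R \<subseteq> R"
    using root_reflect[OF b(1)] by (auto simp: reflect_def mult.commute)
  moreover have "R \<subseteq> reflect (fst h, 0) ` R"
  proof
    fix c assume "c \<in> R"
    then show "c \<in> reflect (fst h, 0) ` R"
      using refl_R reflect_reflect[of "(fst h, 0)" c] b by force
  qed
  moreover have "reflect h 0 \<bullet> c \<in> \<int>" if c: "c \<in> R" for c
  proof -
    have k: "snd h \<in> \<int>"
      using h by (simp add: hyps_def)
    have "reflect h 0 \<bullet> c = snd h * (2 * (c \<bullet> fst h) / (fst h \<bullet> fst h))"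
      by (simp add: reflect_def inner_commute)
    then show ?thesis
      using Ints_mult[OF k root_cartan_int[OF b(1) c]] by simp
  qed
  ultimately show ?thesis
    using orthogonal_transformation_reflect[OF b(2)]
    by (simp add: hyp_symmetry_def lin_part_reflect)
qed

lemma hyp_symmetry_aff_refl: "b \<in> R \<Longrightarrow> hyp_symmetry R (aff_refl b k)"
  by (simp add: aff_refl_eq_reflect hyp_symmetry_reflect hyps_def)

lemma mem_A0_iff: "v \<in> A0 R xi \<longleftrightarrow> (\<forall>b\<in>R. b \<bullet> xi > 0 \<longrightarrow> 0 < v \<bullet> b \<and> v \<bullet> b < 1)"
  by (auto simp: A0_def pos_roots_def)

lemma A0_inner_bounds:
  assumes v: "v \<in> A0 R xi" and c: "c \<in> R"
  shows "c \<bullet> xi > 0 \<Longrightarrow> 0 < v \<bullet> c \<and> v \<bullet> c < 1"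
    and "c \<bullet> xi < 0 \<Longrightarrow> -1 < v \<bullet> c \<and> v \<bullet> c < 0"
    and "-1 < v \<bullet> c \<and> v \<bullet> c < 1"
proof -
  show pos: "c \<bullet> xi > 0 \<Longrightarrow> 0 < v \<bullet> c \<and> v \<bullet> c < 1"
    using v c unfolding mem_A0_iff by blast
  have "(- c) \<bullet> xi > 0 \<Longrightarrow> 0 < v \<bullet> (- c) \<and> v \<bullet> (- c) < 1"
    using v root_uminus[OF c] unfolding mem_A0_iff by blast
  then show neg: "c \<bullet> xi < 0 \<Longrightarrow> -1 < v \<bullet> c \<and> v \<bullet> c < 0"
    by simp
  show "-1 < v \<bullet> c \<and> v \<bullet> c < 1"
    using pos neg regular c by force
qed

lemma A0_one_side:
  assumes h: "h \<in> hyps R" shows "hyp_below (A0 R xi) h \<or> hyp_above (A0 R xi) h"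
proof -
  obtain n where n: "snd h = of_int n"
    using h Ints_cases by (auto simp: hyps_def)
  have c: "fst h \<in> R" "fst h \<bullet> xi \<noteq> 0"
    using h regular by (auto simp: hyps_def)
  note bounds = A0_inner_bounds[OF _ c(1)]
  consider "n \<ge> 1" | "n \<le> -1" | "n = 0" "fst h \<bullet> xi > 0" | "n = 0" "fst h \<bullet> xi < 0"
    using c(2) by linarith
  then show ?thesis
  proof cases
    case 1
    then have "(1::real) \<le> snd h"
      using n by simp
    then show ?thesis
      using bounds(3) unfolding hyp_below_def by force
  next
    case 2
    then have "snd h \<le> -1"
      using n by simp
    then show ?thesis
      using bounds(3) unfolding hyp_above_def by force
  next
    case 3
    then show ?thesis
      using bounds(1) n unfolding hyp_above_def by force
  next
    case 4
    then show ?thesis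
      using bounds(2) n unfolding hyp_below_def by force
  qed
qed

lemma image_A0_one_side:
  assumes g: "hyp_symmetry R g" and h: "h \<in> hyps R"
  shows "hyp_below (g ` A0 R xi) h \<or> hyp_above (g ` A0 R xi) h"
proof -
  obtain h' where "h' \<in> hyps R" "h = hyp_image g h'"
    using h hyp_image_hyps[OF g] by blast
  then show ?thesis
    using A0_one_side hyp_below_image[OF g] hyp_above_image[OF g] by blast
qed

lemma A0_ray: obtains \<epsilon> where "\<epsilon> > 0" "\<And>t. 0 < t \<Longrightarrow> t \<le> \<epsilon> \<Longrightarrow> t *\<^sub>R xi \<in> A0 R xi"
proof -
  define M where "M = (\<Sum>b\<in>R. \<bar>b \<bullet> xi\<bar>)"
  have bM: "\<bar>b \<bullet> xi\<bar> \<le> M" if "b \<in> R" for b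
    unfolding M_def using that finite_roots by (intro member_le_sum) auto
  have M: "M \<ge> 0"
    by (simp add: M_def sum_nonneg)
  have "t *\<^sub>R xi \<in> A0 R xi" if t: "0 < t" "t \<le> 1 / (M + 1)" for t
    unfolding mem_A0_iff
  proof (intro ballI impI conjI)
    fix b assume b: "b \<in> R" and pos: "b \<bullet> xi > 0"
    show "0 < t *\<^sub>R xi \<bullet> b"
      using t pos by (simp add: inner_commute)
    have "t * (b \<bullet> xi) \<le> 1 / (M + 1) * M"
      using t bM[OF b] pos M by (intro mult_mono) auto
    also have "\<dots> < 1"
      using M by (simp add: field_simps)
    finally show "t *\<^sub>R xi \<bullet> b < 1"
      by (simp add: inner_commute)
  qed
  then show ?thesis
    using that[of "1 / (M + 1)"] M by simp
qed

lemma A0_nonempty: "A0 R xi \<noteq> {}"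
  by (metis A0_ray empty_iff order_refl)

lemma separates_reflect_A0:
  assumes h: "h \<in> hyps R" shows "separates h (A0 R xi) (reflect h ` A0 R xi)"
proof -
  have side: "reflect h v \<bullet> fst h = 2 * snd h - v \<bullet> fst h" for v
    using reflect_inner[OF hyps_fst_nonzero[OF h]] .
  from A0_one_side[OF h] show ?thesis
    unfolding separates_def hyp_below_def hyp_above_def by (auto simp: side)
qed

lemma separates_wall_half_balls:
  assumes b0: "b0 \<in> R" and wall: "is_wall (A0 R xi) b0 k0"
    and sep: "separates h (A0 R xi) (aff_refl b0 k0 ` A0 R xi)"
  obtains p e where "p \<bullet> b0 = of_int k0" "e > 0"
    "separates h {v \<in> ball p e. v \<bullet> b0 < of_int k0} {v \<in> ball p e. v \<bullet> b0 > of_int k0}"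
proof -
  obtain p e where pe: "p \<bullet> b0 = of_int k0" "e > 0"
    and halves: "{v \<in> ball p e. v \<bullet> b0 < of_int k0} \<subseteq> A0 R xi
               \<or> {v \<in> ball p e. v \<bullet> b0 > of_int k0} \<subseteq> A0 R xi"
    using wall unfolding is_wall_def by blast
  let ?lo = "{v \<in> ball p e. v \<bullet> b0 < of_int k0}" and ?hi = "{v \<in> ball p e. v \<bullet> b0 > of_int k0}"
  have swap: "aff_refl b0 k0 ` ?lo = ?hi"
    unfolding aff_refl_eq_reflect using reflect_half_ball[OF root_nonzero[OF b0] pe(1)] .
  have "aff_refl b0 k0 (aff_refl b0 k0 v) = v" for v
    using root_nonzero[OF b0] by (simp add: aff_refl_eq_reflect)
  then have swap': "aff_refl b0 k0 ` ?hi = ?lo"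
    unfolding swap[symmetric] image_comp by (simp add: o_def)
  from halves have "separates h ?lo ?hi"
  proof
    assume lo: "?lo \<subseteq> A0 R xi"
    then have "?hi \<subseteq> aff_refl b0 k0 ` A0 R xi"
      unfolding swap[symmetric] by (rule image_mono)
    with lo show ?thesis
      by (rule separates_mono[OF sep])
  next
    assume hi: "?hi \<subseteq> A0 R xi"
    then have "?lo \<subseteq> aff_refl b0 k0 ` A0 R xi"
      unfolding swap'[symmetric] by (rule image_mono)
    with hi have "separates h ?hi ?lo"
      by (rule separates_mono[OF sep])
    then show ?thesis
      by (simp add: separates_commute)
  qed
  then show ?thesis
    using that pe by blast
qed

lemma separating_wall_unique:
  assumes b0: "b0 \<in> R" and wall: "is_wall (A0 R xi) b0 k0" and c: "c \<in> R"
    and sep: "separates (c, j) (A0 R xi) (aff_refl b0 k0 ` A0 R xi)"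
  shows "(c, j) = (b0, of_int k0) \<or> (c, j) = - (b0, of_int k0)"
proof -
  have b0z: "b0 \<noteq> 0"
    using root_nonzero[OF b0] .
  obtain p e where pe: "p \<bullet> b0 = of_int k0" "e > 0"
    and halves: "separates (c, j) {v \<in> ball p e. v \<bullet> b0 < of_int k0}
                                  {v \<in> ball p e. v \<bullet> b0 > of_int k0}"
    using separates_wall_half_balls[OF b0 wall sep] by blast
  note on_line = separates_half_balls_imp_on_hyperplane[OF b0z _ _ halves]
  define q where "q = p + (e / (2 * norm b0)) *\<^sub>R rot90 b0"
  have "q \<in> ball p e"
    using pe(2) b0z by (simp add: q_def dist_norm norm_rot90)
  moreover have "q \<bullet> b0 = of_int k0"
    using pe(1) by (simp add: q_def inner_add_left rot90_inner_self)
  ultimately have "q \<bullet> c = j"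
    by (rule on_line)
  moreover have "p \<bullet> c = j"
    using pe by (intro on_line) auto
  ultimately have "rot90 b0 \<bullet> c = 0"
    using pe(2) b0z by (simp add: q_def inner_add_left)
  define l where "l = (c \<bullet> b0) / (b0 \<bullet> b0)"
  have cl: "c = l *\<^sub>R b0"
    unfolding l_def by (rule orthogonal_rot90_imp_parallel[OF b0z \<open>rot90 b0 \<bullet> c = 0\<close>])
  then have "l = 1 \<or> l = -1"
    using root_multiple[OF b0] c by blast
  moreover have "j = l * of_int k0"
    using \<open>p \<bullet> c = j\<close> pe(1) cl by simp
  ultimately show ?thesis
    using cl by auto
qed

lemma simple_gensE:
  assumes "s \<in> simple_gens R xi"
  obtains b k where "s = aff_refl b k" "b \<in> R" "is_wall (A0 R xi) b k"
  using assms unfolding simple_gens_def by blast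

lemma hyp_symmetry_gen_by: "g \<in> gen_by (simple_gens R xi) \<Longrightarrow> hyp_symmetry R g"
proof (induction rule: gen_by.induct)
  case gen_id
  show ?case by (rule hyp_symmetry_id)
next
  case (gen_step s g)
  then show ?case
    by (metis simple_gensE hyp_symmetry_aff_refl hyp_symmetry_comp)
qed

section \<open>Length as the number of separating lines\<close>

text \<open>Every line is counted once for each orientation, so \<open>card (inversions x)\<close> is twice
  the number of lines separating \<open>A0\<close> from \<open>x ` A0\<close>.\<close>

definition sep_hyps :: "(real^2) set \<Rightarrow> (real^2 \<Rightarrow> real^2) \<Rightarrow> ((real^2) \<times> real) set" where
  "sep_hyps B x = {h \<in> hyps R. separates h B (x ` A0 R xi)}"

abbreviation inversions :: "(real^2 \<Rightarrow> real^2) \<Rightarrow> ((real^2) \<times> real) set" where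
  "inversions x \<equiv> sep_hyps (A0 R xi) x"

lemma inversions_id [simp]: "inversions id = {}"
  using A0_nonempty not_hyp_below_and_above by (auto simp: sep_hyps_def separates_def)

lemma uminus_mem_sep_hyps [simp]: "- h \<in> sep_hyps B x \<longleftrightarrow> h \<in> sep_hyps B x"
  using hyps_uminus[of h] hyps_uminus[of "- h"] by (auto simp: sep_hyps_def)

lemma separates_A0_wall_refl_iff:
  assumes b0: "b0 \<in> R" and wall: "is_wall (A0 R xi) b0 k0" and h: "h \<in> hyps R"
  shows "separates h (A0 R xi) (aff_refl b0 k0 ` A0 R xi) \<longleftrightarrow>
         h = (b0, of_int k0) \<or> h = - (b0, of_int k0)"
proof
  assume "separates h (A0 R xi) (aff_refl b0 k0 ` A0 R xi)"
  then show "h = (b0, of_int k0) \<or> h = - (b0, of_int k0)"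
    using separating_wall_unique[OF b0 wall, of "fst h" "snd h"] h by (simp add: hyps_def)
next
  have "(b0, of_int k0) \<in> hyps R"
    using b0 by (simp add: hyps_def)
  then have "separates (b0, of_int k0) (A0 R xi) (aff_refl b0 k0 ` A0 R xi)"
    unfolding aff_refl_eq_reflect by (rule separates_reflect_A0)
  then show "h = (b0, of_int k0) \<or> h = - (b0, of_int k0) \<Longrightarrow>
      separates h (A0 R xi) (aff_refl b0 k0 ` A0 R xi)"
    using separates_uminus by blast
qed

lemma separates_comp_wall_refl_iff:
  assumes x: "hyp_symmetry R x" and b0: "b0 \<in> R" and wall: "is_wall (A0 R xi) b0 k0"
    and h: "h \<in> hyps R"
  shows "separates h (x ` A0 R xi) ((x \<circ> aff_refl b0 k0) ` A0 R xi) \<longleftrightarrow>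
    h = hyp_image x (b0, of_int k0) \<or> h = - hyp_image x (b0, of_int k0)"
proof -
  obtain h' where h': "h' \<in> hyps R" "h = hyp_image x h'"
    using h hyp_image_hyps[OF x] by blast
  have "separates h (x ` A0 R xi) ((x \<circ> aff_refl b0 k0) ` A0 R xi)
      \<longleftrightarrow> separates h' (A0 R xi) (aff_refl b0 k0 ` A0 R xi)"
    unfolding h'(2) image_comp[symmetric] by (rule separates_image[OF x])
  also have "\<dots> \<longleftrightarrow> h' = (b0, of_int k0) \<or> h' = - (b0, of_int k0)"
    by (rule separates_A0_wall_refl_iff[OF b0 wall h'(1)])
  also have "\<dots> \<longleftrightarrow> h = hyp_image x (b0, of_int k0) \<or> h = - hyp_image x (b0, of_int k0)"
    using inj_hyp_image[OF x] by (auto simp: h'(2) hyp_image_uminus[OF x] inj_eq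
      simp flip: hyp_image_uminus[OF x])
  finally show ?thesis .
qed

lemma sep_hyps_comp_wall_refl:
  assumes x: "hyp_symmetry R x" and b0: "b0 \<in> R" and wall: "is_wall (A0 R xi) b0 k0"
    and B: "B \<noteq> {}" "\<And>h. h \<in> hyps R \<Longrightarrow> hyp_below B h \<or> hyp_above B h"
  defines "H \<equiv> hyp_image x (b0, of_int k0)"
  shows "sep_hyps B (x \<circ> aff_refl b0 k0) = sym_diff (sep_hyps B x) {H, - H}"
proof -
  let ?s = "aff_refl b0 k0"
  have xs: "hyp_symmetry R (x \<circ> ?s)"
    using hyp_symmetry_comp[OF x hyp_symmetry_aff_refl[OF b0]] .
  have "(b0, of_int k0) \<in> hyps R"
    using b0 by (simp add: hyps_def)
  then have H: "H \<in> hyps R" "- H \<in> hyps R"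
    unfolding H_def using hyp_image_hyps[OF x] hyps_uminus by blast+
  have xor: "separates h B ((x \<circ> ?s) ` A0 R xi) \<longleftrightarrow>
      (separates h B (x ` A0 R xi) \<longleftrightarrow> \<not> separates h (x ` A0 R xi) ((x \<circ> ?s) ` A0 R xi))"
    if h: "h \<in> hyps R" for h
    by (rule separates_iff_xor)
      (use A0_nonempty B(1) B(2)[OF h] image_A0_one_side[OF x h] image_A0_one_side[OF xs h]
        in auto)
  show ?thesis
  proof (rule set_eqI)
    fix h
    show "h \<in> sep_hyps B (x \<circ> ?s) \<longleftrightarrow> h \<in> sym_diff (sep_hyps B x) {H, - H}"
    proof (cases "h \<in> hyps R")
      case True
      then show ?thesis
        using xor[OF True] separates_comp_wall_refl_iff[OF x b0 wall True]
        unfolding sep_hyps_def H_def by blast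
    next
      case False
      then show ?thesis
        using H unfolding sep_hyps_def by blast
    qed
  qed
qed

lemma inversions_comp_wall_refl:
  assumes x: "hyp_symmetry R x" and b0: "b0 \<in> R" and wall: "is_wall (A0 R xi) b0 k0"
  defines "H \<equiv> hyp_image x (b0, of_int k0)"
  shows "inversions (x \<circ> aff_refl b0 k0) = sym_diff (inversions x) {H, - H}"
  unfolding H_def using A0_nonempty A0_one_side by (intro sep_hyps_comp_wall_refl[OF x b0 wall])

lemma hyp_symmetry_comp_list: "set ss \<subseteq> simple_gens R xi \<Longrightarrow> hyp_symmetry R (comp_list ss)"
  using hyp_symmetry_gen_by mem_gen_by_iff by blast

lemma finite_card_inversions_le:
  assumes "set ss \<subseteq> simple_gens R xi"
  shows "finite (inversions (comp_list ss)) \<and> card (inversions (comp_list ss)) \<le> 2 * length ss"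
  using assms
proof (induction ss rule: rev_induct)
  case Nil
  show ?case
    by (simp only: comp_list_Nil inversions_id) simp
next
  case (snoc s ss)
  have "s \<in> simple_gens R xi"
    using snoc.prems by simp
  then obtain b k where s: "s = aff_refl b k" "b \<in> R" "is_wall (A0 R xi) b k"
    by (rule simple_gensE)
  let ?H = "hyp_image (comp_list ss) (b, of_int k)"
  have ss: "set ss \<subseteq> simple_gens R xi"
    using snoc.prems by simp
  have eq: "inversions (comp_list (ss @ [s])) = sym_diff (inversions (comp_list ss)) {?H, - ?H}"
    using inversions_comp_wall_refl[OF hyp_symmetry_comp_list[OF ss] s(2,3)] s(1) by simp
  have IH: "finite (inversions (comp_list ss))" "card (inversions (comp_list ss)) \<le> 2 * length ss"
    using snoc.IH[OF ss] by auto
  have "card {?H, - ?H} \<le> 2"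
    by (rule order_trans[OF card_insert_le_m1]) auto
  then have "card (inversions (comp_list (ss @ [s]))) \<le> 2 * length (ss @ [s])"
    using card_sym_diff_le[OF IH(1), of "{?H, - ?H}"] IH(2) unfolding eq by simp
  moreover have "finite (inversions (comp_list (ss @ [s])))"
    using IH(1) unfolding eq by simp
  ultimately show ?case by blast
qed

lemma card_inversions_comp_wall_refl:
  assumes x: "hyp_symmetry R x" "finite (inversions x)" and b: "b \<in> R" "is_wall (A0 R xi) b k"
    and notin: "hyp_image x (b, of_int k) \<notin> inversions x"
  shows "card (inversions (x \<circ> aff_refl b k)) = card (inversions x) + 2"
proof -
  let ?H = "hyp_image x (b, of_int k)"
  have "(b, of_int k) \<in> hyps R"
    using b by (simp add: hyps_def)
  then have "?H \<in> hyps R"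
    using hyp_image_hyps[OF x(1)] by blast
  then have "?H \<noteq> - ?H"
    by (intro neq_uminus_if_fst_nonzero hyps_fst_nonzero)
  moreover have "- ?H \<notin> inversions x"
    using notin by simp
  then have "inversions (x \<circ> aff_refl b k) = insert ?H (insert (- ?H) (inversions x))"
    unfolding inversions_comp_wall_refl[OF x(1) b] using notin by blast
  ultimately show ?thesis
    using x(2) notin by simp
qed

lemma inversion_crossed:
  assumes "set ts \<subseteq> simple_gens R xi" and "h \<in> inversions (comp_list ts)"
  shows "\<exists>ys b k zs. ts = ys @ aff_refl b k # zs \<and> b \<in> R \<and>
           h \<in> {hyp_image (comp_list ys) (b, of_int k), - hyp_image (comp_list ys) (b, of_int k)}"
  using assms
proof (induction ts rule: rev_induct)
  case Nil
  then show ?case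
    by (simp only: comp_list_Nil inversions_id) simp
next
  case (snoc s ss)
  have "s \<in> simple_gens R xi"
    using snoc.prems by simp
  then obtain b k where s: "s = aff_refl b k" "b \<in> R" "is_wall (A0 R xi) b k"
    by (rule simple_gensE)
  have ss: "set ss \<subseteq> simple_gens R xi"
    using snoc.prems by simp
  show ?case
  proof (cases "h \<in> inversions (comp_list ss)")
    case True
    then obtain ys b' k' zs where "ss = ys @ aff_refl b' k' # zs" "b' \<in> R"
      "h \<in> {hyp_image (comp_list ys) (b', of_int k'), - hyp_image (comp_list ys) (b', of_int k')}"
      using snoc.IH[OF ss] by blast
    moreover from this(1) have "ss @ [s] = ys @ aff_refl b' k' # (zs @ [s])"
      by simp
    ultimately show ?thesis
      by blast
  next
    case False
    let ?H = "hyp_image (comp_list ss) (b, of_int k)"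
    have "inversions (comp_list (ss @ [s])) = sym_diff (inversions (comp_list ss)) {?H, - ?H}"
      using inversions_comp_wall_refl[OF hyp_symmetry_comp_list[OF ss] s(2,3)] s(1) by simp
    then have "h \<in> {?H, - ?H}"
      using snoc.prems(2) False by blast
    moreover have "ss @ [s] = ss @ aff_refl b k # []"
      using s(1) by simp
    ultimately show ?thesis
      using s(2) by blast
  qed
qed

lemma exchange_condition:
  assumes ts: "set ts \<subseteq> simple_gens R xi" and b0: "b0 \<in> R"
    and sep: "hyp_image (comp_list ts) (b0, of_int k0) \<in> inversions (comp_list ts)"
  obtains ts' where "set ts' \<subseteq> simple_gens R xi" "length ts' + 1 = length ts"
    "comp_list ts' = comp_list ts \<circ> aff_refl b0 k0"
proof -
  let ?x = "comp_list ts"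
  obtain ys b k zs where split: "ts = ys @ aff_refl b k # zs" and b: "b \<in> R"
    and crossed: "hyp_image ?x (b0, of_int k0) \<in>
      {hyp_image (comp_list ys) (b, of_int k), - hyp_image (comp_list ys) (b, of_int k)}"
    using inversion_crossed[OF ts sep] by blast
  let ?y = "comp_list ys" and ?z = "comp_list zs" and ?t = "aff_refl b k"
  have ys: "set ys \<subseteq> simple_gens R xi" and zs: "set (ys @ zs) \<subseteq> simple_gens R xi"
    using ts split by auto
  have tt: "?t \<circ> ?t = id"
    using root_nonzero[OF b] by (simp add: fun_eq_iff aff_refl_eq_reflect)
  have refl_eq: "reflect (hyp_image ?x (b0, of_int k0)) = reflect (hyp_image ?y (b, of_int k))"
    using crossed by (metis empty_iff insert_iff reflect_uminus)
  have conj_y: "reflect (hyp_image ?y (b, of_int k)) \<circ> ?y = ?y \<circ> ?t"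
    using hyp_symmetry_conj_reflect[OF hyp_symmetry_comp_list[OF ys], of "(b, of_int k)"]
    by (simp add: aff_refl_eq_reflect)
  have "?x \<circ> aff_refl b0 k0 = reflect (hyp_image ?x (b0, of_int k0)) \<circ> ?x"
    unfolding aff_refl_eq_reflect
    by (rule hyp_symmetry_conj_reflect[OF hyp_symmetry_comp_list[OF ts]])
  also have "\<dots> = (reflect (hyp_image ?y (b, of_int k)) \<circ> ?y) \<circ> ?t \<circ> ?z"
    unfolding refl_eq using split by (simp add: comp_assoc)
  also have "\<dots> = ?y \<circ> (?t \<circ> ?t) \<circ> ?z"
    unfolding conj_y by (simp add: comp_assoc)
  also have "\<dots> = comp_list (ys @ zs)"
    using tt by simp
  finally show ?thesis
    using that[OF zs] split by simp
qed

lemma shorter_word_if_few_inversions: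
  assumes "set ss \<subseteq> simple_gens R xi" and "card (inversions (comp_list ss)) < 2 * length ss"
  shows "\<exists>ss'. set ss' \<subseteq> simple_gens R xi \<and> comp_list ss' = comp_list ss \<and> length ss' < length ss"
  using assms
proof (induction ss rule: rev_induct)
  case Nil
  then show ?case by simp
next
  case (snoc s ss)
  have "s \<in> simple_gens R xi"
    using snoc.prems by simp
  then obtain b k where s: "s = aff_refl b k" "b \<in> R" "is_wall (A0 R xi) b k"
    by (rule simple_gensE)
  have ss: "set ss \<subseteq> simple_gens R xi"
    using snoc.prems by simp
  show ?case
  proof (cases "card (inversions (comp_list ss)) < 2 * length ss")
    case True
    then obtain ss' where "set ss' \<subseteq> simple_gens R xi" "comp_list ss' = comp_list ss"
      "length ss' < length ss"
      using snoc.IH[OF ss] by blast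
    then show ?thesis
      using snoc.prems by (intro exI[of _ "ss' @ [s]"]) auto
  next
    case False
    have "hyp_image (comp_list ss) (b, of_int k) \<in> inversions (comp_list ss)"
    proof (rule ccontr)
      assume "hyp_image (comp_list ss) (b, of_int k) \<notin> inversions (comp_list ss)"
      then have "card (inversions (comp_list ss \<circ> s)) = card (inversions (comp_list ss)) + 2"
        unfolding s(1) using card_inversions_comp_wall_refl[OF hyp_symmetry_comp_list[OF ss]
            conjunct1[OF finite_card_inversions_le[OF ss]] s(2,3)] by blast
      moreover have "comp_list (ss @ [s]) = comp_list ss \<circ> s"
        by simp
      then have "card (inversions (comp_list ss \<circ> s)) < 2 * Suc (length ss)"
        using snoc.prems(2) by (simp only: length_append_singleton)
      ultimately show False
        using False unfolding mult_Suc_right by arith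
    qed
    then obtain ts' where "set ts' \<subseteq> simple_gens R xi" "length ts' + 1 = length ss"
      "comp_list ts' = comp_list ss \<circ> aff_refl b k"
      using exchange_condition[OF ss s(2)] by blast
    then show ?thesis
      using s(1) by (intro exI[of _ ts']) auto
  qed
qed

lemma clen_eq_half_card_inversions:
  assumes "x \<in> gen_by (simple_gens R xi)"
  shows "2 * clen R xi x = card (inversions x)"
proof -
  let ?P = "\<lambda>n. \<exists>ss. length ss = n \<and> set ss \<subseteq> simple_gens R xi \<and> comp_list ss = x"
  obtain ss0 where "set ss0 \<subseteq> simple_gens R xi" "comp_list ss0 = x"
    using assms mem_gen_by_iff by blast
  then have "?P (clen R xi x)"
    unfolding clen_Least by (intro LeastI[of ?P "length ss0"]) blast
  then obtain ss
    where ss: "length ss = clen R xi x" "set ss \<subseteq> simple_gens R xi" "comp_list ss = x"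
    by blast
  have "\<not> card (inversions x) < 2 * clen R xi x"
  proof
    assume "card (inversions x) < 2 * clen R xi x"
    then have "card (inversions (comp_list ss)) < 2 * length ss"
      using ss by simp
    then obtain ss' where ss': "set ss' \<subseteq> simple_gens R xi" "comp_list ss' = comp_list ss"
      "length ss' < length ss"
      using shorter_word_if_few_inversions[OF ss(2)] by blast
    then have "clen R xi x \<le> length ss'"
      unfolding clen_Least using ss(3) by (intro Least_le) blast
    then show False
      using ss'(3) ss(1) by simp
  qed
  then show ?thesis
    using finite_card_inversions_le[OF ss(2)] ss by simp
qed

lemma clen_comp_wall_refl:
  assumes x: "x \<in> gen_by (simple_gens R xi)" and b: "b \<in> R" "is_wall (A0 R xi) b k"
    and notin: "hyp_image x (b, of_int k) \<notin> inversions x"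
  shows "clen R xi (x \<circ> aff_refl b k) = clen R xi x + 1"
proof -
  have s: "aff_refl b k \<in> simple_gens R xi"
    using b by (auto simp: simple_gens_def)
  obtain ss where "set ss \<subseteq> simple_gens R xi" "comp_list ss = x"
    using x mem_gen_by_iff by blast
  then have "finite (inversions x)"
    using finite_card_inversions_le by blast
  then have "card (inversions (x \<circ> aff_refl b k)) = card (inversions x) + 2"
    using card_inversions_comp_wall_refl[OF hyp_symmetry_gen_by[OF x] _ b notin] by blast
  then show ?thesis
    using clen_eq_half_card_inversions[OF x]
      clen_eq_half_card_inversions[OF gen_by_comp[OF x gen_by_generator[OF s]]] by simp
qed

section \<open>The simple reflections generate the affine Weyl group\<close>

definition generic :: "real^2 \<Rightarrow> bool" where
  "generic y \<longleftrightarrow> (\<forall>h\<in>hyps R. y \<bullet> fst h \<noteq> snd h)"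

lemma generic_preimage:
  assumes g: "hyp_symmetry R g" and gen: "generic (g z)" shows "generic z"
  unfolding generic_def
proof (intro ballI notI)
  fix h assume h: "h \<in> hyps R" and "z \<bullet> fst h = snd h"
  then have "g z \<bullet> fst (hyp_image g h) = snd (hyp_image g h)"
    using hyp_image_side[OF g, of z h] by simp
  moreover have "hyp_image g h \<in> hyps R"
    using h hyp_image_hyps[OF g] by blast
  ultimately show False
    using gen by (auto simp: generic_def)
qed

lemma finite_hyps_separating_points: "finite {h \<in> hyps R. separates h {u} {v}}"
proof -
  define N where "N = \<lceil>\<Sum>c\<in>R. \<bar>u \<bullet> c\<bar> + \<bar>v \<bullet> c\<bar>\<rceil>"
  have "{h \<in> hyps R. separates h {u} {v}} \<subseteq> R \<times> (of_int ` {-N..N})"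
  proof
    fix h assume h: "h \<in> {h \<in> hyps R. separates h {u} {v}}"
    then obtain n where n: "snd h = of_int n" and c: "fst h \<in> R"
      by (auto simp: hyps_def elim: Ints_cases)
    have "\<bar>snd h\<bar> \<le> \<bar>u \<bullet> fst h\<bar> + \<bar>v \<bullet> fst h\<bar>"
      using h by (auto simp: separates_def hyp_below_def hyp_above_def)
    also have "\<dots> \<le> (\<Sum>c\<in>R. \<bar>u \<bullet> c\<bar> + \<bar>v \<bullet> c\<bar>)"
      using c finite_roots by (intro member_le_sum) auto
    also have "\<dots> \<le> of_int N"
      unfolding N_def by (rule le_of_int_ceiling)
    finally have "\<bar>n\<bar> \<le> N"
      using n by simp
    then have "snd h \<in> of_int ` {-N..N}"
      unfolding n by (intro imageI) (simp add: abs_le_iff)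
    then show "h \<in> R \<times> (of_int ` {-N..N})"
      using c by (simp add: mem_Times_iff)
  qed
  then show ?thesis
    using finite_roots finite_subset by blast
qed

lemma finite_sep_hyps_point: "finite (sep_hyps {y} g)"
proof -
  obtain y0 where "y0 \<in> A0 R xi"
    using A0_nonempty by blast
  then have "sep_hyps {y} g \<subseteq> {h \<in> hyps R. separates h {y} {g y0}}"
    unfolding sep_hyps_def by (auto intro: separates_mono)
  then show ?thesis
    using finite_hyps_separating_points finite_subset by blast
qed

definition alcove_ineqs :: "((real^2) \<times> real) set" where
  "alcove_ineqs = (\<lambda>b. (- b, 0)) ` pos_roots R xi \<union> (\<lambda>b. (b, 1)) ` pos_roots R xi"

lemma finite_alcove_ineqs: "finite alcove_ineqs"
  using finite_roots by (simp add: alcove_ineqs_def pos_roots_def)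

lemma alcove_ineqs_hyps: "alcove_ineqs \<subseteq> hyps R"
  by (auto simp: alcove_ineqs_def pos_roots_def hyps_def root_uminus)

lemma halfspaces_lt_alcove_ineqs: "halfspaces_lt alcove_ineqs = A0 R xi"
proof -
  have "v \<in> halfspaces_lt alcove_ineqs \<longleftrightarrow> (\<forall>b\<in>pos_roots R xi. 0 < v \<bullet> b \<and> v \<bullet> b < 1)" for v
    by (simp add: halfspaces_lt_def alcove_ineqs_def ball_Un) blast
  then show ?thesis
    by (auto simp: A0_def)
qed

lemma mem_A0_if_same_sides:
  assumes gs: "hyp_symmetry R g" and y: "y \<in> A0 R xi"
    and same: "\<And>h. h \<in> hyps R \<Longrightarrow> g v \<bullet> fst h < snd h \<longleftrightarrow> g y \<bullet> fst h < snd h"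
  shows "v \<in> A0 R xi"
proof -
  have "v \<bullet> fst h < snd h" if h: "h \<in> alcove_ineqs" for h
  proof -
    have "hyp_image g h \<in> hyps R"
      using h alcove_ineqs_hyps hyp_image_hyps[OF gs] by blast
    moreover have "y \<bullet> fst h < snd h"
      using y h halfspaces_lt_alcove_ineqs by (auto simp: halfspaces_lt_def)
    ultimately show ?thesis
      using same[of "hyp_image g h"] by (simp add: hyp_image_less_iff[OF gs])
  qed
  then show ?thesis
    using halfspaces_lt_alcove_ineqs by (auto simp: halfspaces_lt_def)
qed

lemma wall_separating_A0_from_point:
  assumes y: "y \<notin> A0 R xi" and gen: "generic y"
  obtains c j where "c \<in> R" "is_wall (A0 R xi) c j" "separates (c, of_int j) (A0 R xi) {y}"
proof -
  obtain x0 where "x0 \<in> halfspaces_lt alcove_ineqs"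
    using A0_nonempty halfspaces_lt_alcove_ineqs by blast
  moreover have "\<forall>h\<in>alcove_ineqs. fst h \<noteq> 0"
    using alcove_ineqs_hyps hyps_fst_nonzero by blast
  ultimately obtain F where F: "F \<subseteq> alcove_ineqs" "halfspaces_le F \<subseteq> halfspaces_le alcove_ineqs"
    and facets: "\<And>h. h \<in> F \<Longrightarrow> has_facet (halfspaces_lt alcove_ineqs) h"
    using irredundant_subsystem[OF finite_alcove_ineqs] by metis
  have "y \<notin> halfspaces_le alcove_ineqs"
  proof
    assume "y \<in> halfspaces_le alcove_ineqs"
    then have "y \<in> halfspaces_lt alcove_ineqs"
      using gen alcove_ineqs_hyps
      by (force simp: halfspaces_le_def halfspaces_lt_def generic_def order.order_iff_strict)
    then show False
      using y halfspaces_lt_alcove_ineqs by blast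
  qed
  then obtain h where h: "h \<in> F" "y \<bullet> fst h > snd h"
    using F(2) by (force simp: halfspaces_le_def)
  then have "h \<in> hyps R"
    using F(1) alcove_ineqs_hyps by blast
  then obtain j where j: "snd h = of_int j"
    by (auto simp: hyps_def elim: Ints_cases)
  define c where "c = fst h"
  have c: "c \<in> R" "h = (c, of_int j)"
    using \<open>h \<in> hyps R\<close> j by (auto simp: c_def hyps_def prod_eq_iff)
  have "is_wall (A0 R xi) c j"
    using facets[OF h(1)] c(2) halfspaces_lt_alcove_ineqs by (simp add: is_wall_if_has_facet)
  moreover have "hyp_below (A0 R xi) h"
    using h(1) F(1) halfspaces_lt_alcove_ineqs by (force simp: hyp_below_def halfspaces_lt_def)
  then have "separates (c, of_int j) (A0 R xi) {y}"
    using h(2) c(2) by (simp add: separates_def hyp_above_def)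
  ultimately show ?thesis
    using that c(1) by blast
qed

lemma descent_step:
  assumes gen: "generic y" and g: "g \<in> gen_by (simple_gens R xi)" and y: "y \<notin> g ` A0 R xi"
  obtains s where "s \<in> simple_gens R xi" "sep_hyps {y} (g \<circ> s) \<subset> sep_hyps {y} g"
proof -
  have gs: "hyp_symmetry R g"
    using hyp_symmetry_gen_by[OF g] .
  obtain z where z: "y = g z"
    using hyp_symmetry_surj[OF gs] by blast
  have "z \<notin> A0 R xi"
    using y z by blast
  moreover have "generic z"
    using generic_preimage[OF gs] gen z by blast
  ultimately obtain c j where c: "c \<in> R" "is_wall (A0 R xi) c j"
    and sep: "separates (c, of_int j) (A0 R xi) {z}"
    using wall_separating_A0_from_point by blast
  let ?s = "aff_refl c j" and ?H = "hyp_image g (c, of_int j)"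
  have "separates ?H {y} (g ` A0 R xi)"
    using separates_image[OF gs] sep z separates_commute by (metis image_empty image_insert)
  moreover have "(c, of_int j) \<in> hyps R"
    using c by (simp add: hyps_def)
  then have "?H \<in> hyps R"
    using hyp_image_hyps[OF gs] by blast
  ultimately have "?H \<in> sep_hyps {y} g"
    by (simp add: sep_hyps_def)
  then have H: "?H \<in> sep_hyps {y} g" "- ?H \<in> sep_hyps {y} g"
    by simp_all
  have "{y} \<noteq> {}" "\<And>h. h \<in> hyps R \<Longrightarrow> hyp_below {y} h \<or> hyp_above {y} h"
    using gen by (auto simp: generic_def hyp_below_def hyp_above_def)
  then have "sep_hyps {y} (g \<circ> ?s) = sym_diff (sep_hyps {y} g) {?H, - ?H}"
    by (rule sep_hyps_comp_wall_refl[OF gs c])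
  then have "sep_hyps {y} (g \<circ> ?s) \<subset> sep_hyps {y} g"
    using H by blast
  moreover have "?s \<in> simple_gens R xi"
    using c by (auto simp: simple_gens_def)
  ultimately show ?thesis
    using that by blast
qed

lemma generic_point_in_alcove:
  assumes gen: "generic y" and g: "g \<in> gen_by (simple_gens R xi)"
  shows "\<exists>g'\<in>gen_by (simple_gens R xi). y \<in> g' ` A0 R xi"
  using g
proof (induction "card (sep_hyps {y} g)" arbitrary: g rule: less_induct)
  case less
  show ?case
  proof (cases "y \<in> g ` A0 R xi")
    case True
    then show ?thesis
      using less.prems by blast
  next
    case False
    then obtain s where s: "s \<in> simple_gens R xi" "sep_hyps {y} (g \<circ> s) \<subset> sep_hyps {y} g"
      using descent_step[OF gen less.prems] by blast
    then have "card (sep_hyps {y} (g \<circ> s)) < card (sep_hyps {y} g)"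
      using finite_sep_hyps_point by (intro psubset_card_mono) auto
    moreover have "g \<circ> s \<in> gen_by (simple_gens R xi)"
      using less.prems s(1) by (auto intro: gen_by_comp gen_by_generator)
    ultimately show ?thesis
      by (rule less.hyps)
  qed
qed

lemma root_orthogonal_rot90:
  assumes b: "b \<in> R" and c: "c \<in> R" and "rot90 b \<bullet> c = 0"
  shows "c = b \<or> c = - b"
proof -
  define l where "l = (c \<bullet> b) / (b \<bullet> b)"
  have "c = l *\<^sub>R b"
    unfolding l_def using orthogonal_rot90_imp_parallel[OF root_nonzero[OF b] assms(3)] .
  moreover from this have "l = 1 \<or> l = -1"
    using root_multiple[OF b] c by blast
  ultimately show ?thesis by auto
qed

text \<open>Only countably many points of a line lie on another line of the arrangement.\<close>

lemma generic_point_on_hyperplane: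
  assumes b: "b \<in> R"
  obtains q where "q \<bullet> b = k" "\<forall>c\<in>R - {b, - b}. \<forall>j\<in>\<int>. q \<bullet> c \<noteq> j"
proof -
  define d where "d = rot90 b"
  define q0 where "q0 = (k / (b \<bullet> b)) *\<^sub>R b"
  have dc: "d \<bullet> c \<noteq> 0" if "c \<in> R - {b, - b}" for c
    using root_orthogonal_rot90[OF b, of c] that by (auto simp: d_def)
  define bad where "bad = (\<lambda>(c, n). (of_int n - q0 \<bullet> c) / (d \<bullet> c)) ` (R \<times> (UNIV :: int set))"
  have "countable bad"
    unfolding bad_def
    by (intro countable_image countable_SIGMA) (simp_all add: countable_finite finite_roots)
  then have "bad \<noteq> UNIV"
    using uncountable_UNIV_real by auto
  then obtain t where t: "t \<notin> bad"
    by blast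
  define q where "q = q0 + t *\<^sub>R d"
  have "q \<bullet> b = k"
    using root_nonzero[OF b] by (simp add: q_def q0_def d_def inner_add_left rot90_inner_self)
  moreover have "q \<bullet> c \<noteq> j" if c: "c \<in> R - {b, - b}" and j: "j \<in> \<int>" for c j
  proof
    assume e: "q \<bullet> c = j"
    obtain n where n: "j = of_int n"
      using j Ints_cases by blast
    have "t = (of_int n - q0 \<bullet> c) / (d \<bullet> c)"
      using e n dc[OF c] by (simp add: q_def inner_add_left field_simps)
    then have "t \<in> bad"
      unfolding bad_def using c by (intro image_eqI[of _ _ "(c, n)"]) auto
    with t show False ..
  qed
  ultimately show ?thesis
    using that by blast
qed

lemma eventually_in_unit_strip:
  assumes b: "b \<in> R" and q: "q \<bullet> b = of_int k" and gen: "\<forall>c\<in>R - {b, - b}. \<forall>j\<in>\<int>. q \<bullet> c \<noteq> j"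
    and c: "c \<in> R"
  shows "\<exists>m::int. eventually (\<lambda>w. of_int m < w \<bullet> c \<and> w \<bullet> c < of_int m + 1)
           (at q within {w. w \<bullet> b > of_int k})"
proof -
  let ?F = "at q within {w. w \<bullet> b > of_int k}"
  have above: "eventually (\<lambda>w. w \<bullet> b > of_int k) ?F"
    by (auto simp: eventually_at intro: exI[of _ 1])
  have lim: "((\<lambda>w. w \<bullet> c) \<longlongrightarrow> q \<bullet> c) ?F"
    by (intro tendsto_intros)
  consider "c = b" | "c = - b" | "c \<in> R - {b, - b}"
    using c by blast
  then show ?thesis
  proof cases
    case 1
    have "eventually (\<lambda>w. w \<bullet> c < of_int k + 1) ?F"
      using order_tendstoD(2)[OF lim] q 1 by simp
    then show ?thesis
      using above 1 by (intro exI[of _ k]) (auto elim: eventually_mono[OF eventually_conj])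
  next
    case 2
    have "eventually (\<lambda>w. of_int (- k - 1) < w \<bullet> c) ?F"
      using order_tendstoD(1)[OF lim] q 2 by simp
    then show ?thesis
      using above 2
      by (intro exI[of _ "- k - 1"]) (auto elim: eventually_mono[OF eventually_conj])
  next
    case 3
    define m where "m = \<lfloor>q \<bullet> c\<rfloor>"
    have "q \<bullet> c \<noteq> of_int m"
      using gen 3 by auto
    then have lo: "of_int m < q \<bullet> c" and hi: "q \<bullet> c < of_int m + 1"
      unfolding m_def by (auto simp: less_le) linarith
    show ?thesis
      using eventually_conj[OF order_tendstoD(1)[OF lim lo] order_tendstoD(2)[OF lim hi]]
      by (intro exI[of _ m])
  qed
qed

lemma upper_half_ball_in_strips:
  assumes b: "b \<in> R" and q: "q \<bullet> b = of_int k" and gen: "\<forall>c\<in>R - {b, - b}. \<forall>j\<in>\<int>. q \<bullet> c \<noteq> j"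
  obtains e m where "e > 0"
    "\<And>w c. w \<in> ball q e \<Longrightarrow> w \<bullet> b > of_int k \<Longrightarrow> c \<in> R \<Longrightarrow>
       of_int (m c) < w \<bullet> c \<and> w \<bullet> c < of_int (m c) + 1"
proof -
  let ?F = "at q within {w. w \<bullet> b > of_int k}"
  have "\<forall>c\<in>R. \<exists>m::int. eventually (\<lambda>w. of_int m < w \<bullet> c \<and> w \<bullet> c < of_int m + 1) ?F"
    using eventually_in_unit_strip[OF b q gen] by blast
  then obtain m where "\<forall>c\<in>R. eventually (\<lambda>w. of_int (m c) < w \<bullet> c \<and> w \<bullet> c < of_int (m c) + 1) ?F"
    by (auto dest!: bchoice)
  then have "eventually (\<lambda>w. \<forall>c\<in>R. of_int (m c) < w \<bullet> c \<and> w \<bullet> c < of_int (m c) + 1) ?F"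
    by (rule eventually_ball_finite[OF finite_roots])
  then obtain e where e: "e > 0" and E: "\<forall>w\<in>{w. w \<bullet> b > of_int k}. w \<noteq> q \<and> dist w q < e \<longrightarrow>
      (\<forall>c\<in>R. of_int (m c) < w \<bullet> c \<and> w \<bullet> c < of_int (m c) + 1)"
    unfolding eventually_at by blast
  show ?thesis
  proof (rule that[OF e])
    fix w c assume w: "w \<in> ball q e" "w \<bullet> b > of_int k" and c: "c \<in> R"
    have "w \<noteq> q"
      using w(2) q by auto
    then show "of_int (m c) < w \<bullet> c \<and> w \<bullet> c < of_int (m c) + 1"
      using E w c by (simp add: dist_commute)
  qed
qed

lemma upper_half_ball_same_sides:
  assumes b: "b \<in> R" and q: "q \<bullet> b = of_int k" and gen: "\<forall>c\<in>R - {b, - b}. \<forall>j\<in>\<int>. q \<bullet> c \<noteq> j"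
  obtains e where "e > 0"
    "\<And>w. w \<in> ball q e \<Longrightarrow> w \<bullet> b > of_int k \<Longrightarrow> generic w"
    "\<And>w w' h. w \<in> ball q e \<Longrightarrow> w \<bullet> b > of_int k \<Longrightarrow> w' \<in> ball q e \<Longrightarrow> w' \<bullet> b > of_int k \<Longrightarrow>
       h \<in> hyps R \<Longrightarrow> w \<bullet> fst h < snd h \<longleftrightarrow> w' \<bullet> fst h < snd h"
proof -
  obtain e m where e: "e > 0" and strip: "\<And>w c. w \<in> ball q e \<Longrightarrow> w \<bullet> b > of_int k \<Longrightarrow> c \<in> R \<Longrightarrow>
      of_int (m c) < w \<bullet> c \<and> w \<bullet> c < of_int (m c) + 1"
    using upper_half_ball_in_strips[OF b q gen] by blast
  have hyp: "fst h \<in> R" "snd h = of_int (\<lfloor>snd h\<rfloor>)" if "h \<in> hyps R" for h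
    using that by (auto simp: hyps_def elim: Ints_cases)
  show ?thesis
  proof (rule that[OF e])
    fix w assume "w \<in> ball q e" "w \<bullet> b > of_int k"
    then show "generic w"
      unfolding generic_def using strip strictly_between_ints(2) hyp by metis
  next
    fix w w' h assume "w \<in> ball q e" "w \<bullet> b > of_int k" "w' \<in> ball q e" "w' \<bullet> b > of_int k"
      and "h \<in> hyps R"
    then show "w \<bullet> fst h < snd h \<longleftrightarrow> w' \<bullet> fst h < snd h"
      using strip strictly_between_ints(1) hyp by metis
  qed
qed

text \<open>A generic point just above the line lies in an alcove \<open>g ` A0\<close>; a small half ball above
  the line meets no other line, so it lies in \<open>g ` A0\<close> too, and the line is a wall of
  \<open>g ` A0\<close>.\<close>

lemma hyperplane_image_of_wall:
  assumes b: "b \<in> R"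
  obtains g c j where "g \<in> gen_by (simple_gens R xi)" "c \<in> R" "is_wall (A0 R xi) c j"
    "hyp_image g (c, of_int j) = (b, of_int k)"
proof -
  obtain q where q: "q \<bullet> b = of_int k" and gen: "\<forall>c\<in>R - {b, - b}. \<forall>j\<in>\<int>. q \<bullet> c \<noteq> j"
    using generic_point_on_hyperplane[OF b] by blast
  obtain e where e: "e > 0"
    and generic_U: "\<And>w. w \<in> ball q e \<Longrightarrow> w \<bullet> b > of_int k \<Longrightarrow> generic w"
    and same_side: "\<And>w w' h. w \<in> ball q e \<Longrightarrow> w \<bullet> b > of_int k \<Longrightarrow> w' \<in> ball q e \<Longrightarrow>
        w' \<bullet> b > of_int k \<Longrightarrow> h \<in> hyps R \<Longrightarrow> w \<bullet> fst h < snd h \<longleftrightarrow> w' \<bullet> fst h < snd h"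
    using upper_half_ball_same_sides[OF b q gen] by blast
  define q' where "q' = q + (e / (2 * norm b)) *\<^sub>R b"
  have q': "q' \<in> ball q e" "q' \<bullet> b > of_int k"
    using e root_nonzero[OF b] q by (auto simp: q'_def dist_norm inner_add_left)
  obtain g where g: "g \<in> gen_by (simple_gens R xi)" "q' \<in> g ` A0 R xi"
    using generic_point_in_alcove[OF generic_U[OF q'] gen_by.gen_id] by blast
  have gs: "hyp_symmetry R g"
    using hyp_symmetry_gen_by[OF g(1)] .
  obtain y' where y': "y' \<in> A0 R xi" "q' = g y'"
    using g(2) by blast
  have "(b, of_int k) \<in> hyps R"
    using b by (simp add: hyps_def)
  then obtain h' where h': "h' \<in> hyps R" "(b, of_int k) = hyp_image g h'"
    using hyp_image_hyps[OF gs] by blast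
  then obtain j where j: "snd h' = of_int j"
    by (auto simp: hyps_def elim: Ints_cases)
  obtain p' where p': "q = g p'"
    using hyp_symmetry_surj[OF gs] by blast
  have "p' \<bullet> fst h' = snd h'"
    using hyp_image_side[OF gs, where v = p' and h = h'] h'(2) p' q
    by (metis diff_self fst_conv snd_conv eq_iff_diff_eq_0)
  moreover have "{v \<in> ball p' e. v \<bullet> fst h' > snd h'} \<subseteq> A0 R xi"
  proof
    fix v assume v: "v \<in> {v \<in> ball p' e. v \<bullet> fst h' > snd h'}"
    have "g v \<bullet> fst (hyp_image g h') > snd (hyp_image g h')"
      using v hyp_image_greater_iff[OF gs] by simp
    then have "g v \<in> ball q e" "g v \<bullet> b > of_int k"
      using v hyp_symmetry_dist[OF gs, of p' v] p' by (auto simp: h'(2)[symmetric] dist_commute)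
    then show "v \<in> A0 R xi"
      using mem_A0_if_same_sides[OF gs y'(1)] same_side q' y'(2) by blast
  qed
  ultimately have "is_wall (A0 R xi) (fst h') j"
    unfolding is_wall_def j using e by blast
  moreover have "hyp_image g (fst h', of_int j) = (b, of_int k)"
    using h'(2) j by (metis prod.collapse)
  ultimately show ?thesis
    using that g(1) h'(1) by (auto simp: hyps_def)
qed

lemma simple_gen_involution: "s \<in> simple_gens R xi \<Longrightarrow> s \<circ> s = id"
  by (auto elim!: simple_gensE simp: fun_eq_iff aff_refl_eq_reflect root_nonzero)

lemma gen_by_right_inverse:
  assumes "g \<in> gen_by (simple_gens R xi)"
  shows "\<exists>g'\<in>gen_by (simple_gens R xi). g \<circ> g' = id"
  using assms
proof (induction rule: gen_by.induct)
  case gen_id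
  show ?case
    by (rule bexI[of _ id]) (auto intro: gen_by.gen_id)
next
  case (gen_step s g)
  then obtain g' where g': "g' \<in> gen_by (simple_gens R xi)" "g \<circ> g' = id"
    by blast
  have "s \<circ> g \<circ> (g' \<circ> s) = s \<circ> (g \<circ> g') \<circ> s"
    by (simp only: comp_assoc)
  also have "\<dots> = s \<circ> s"
    using g'(2) by simp
  finally have "s \<circ> g \<circ> (g' \<circ> s) = s \<circ> s" .
  then show ?case
    using gen_step.hyps(1) g'(1) simple_gen_involution
    by (metis gen_by_comp gen_by_generator)
qed

lemma aff_refl_in_gen_by:
  assumes b: "b \<in> R" shows "aff_refl b k \<in> gen_by (simple_gens R xi)"
proof -
  obtain g c j where g: "g \<in> gen_by (simple_gens R xi)" and c: "c \<in> R" "is_wall (A0 R xi) c j"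
    and img: "hyp_image g (c, of_int j) = (b, of_int k)"
    using hyperplane_image_of_wall[OF b] by blast
  obtain g' where g': "g' \<in> gen_by (simple_gens R xi)" "g \<circ> g' = id"
    using gen_by_right_inverse[OF g] by blast
  have "g \<circ> aff_refl c j = aff_refl b k \<circ> g"
    using hyp_symmetry_conj_reflect[OF hyp_symmetry_gen_by[OF g]] img
    by (simp add: aff_refl_eq_reflect)
  then have "aff_refl b k = g \<circ> aff_refl c j \<circ> g'"
    using g'(2) by (metis comp_assoc comp_id)
  moreover have "aff_refl c j \<in> gen_by (simple_gens R xi)"
    using c by (auto intro: gen_by_generator simp: simple_gens_def)
  ultimately show ?thesis
    using g g' gen_by_comp by metis
qed

lemma affW_subset_gen_by: "affW R \<subseteq> gen_by (simple_gens R xi)"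
proof
  fix w assume "w \<in> affW R"
  then show "w \<in> gen_by (simple_gens R xi)"
    unfolding affW_def
  proof (induction rule: gen_by.induct)
    case gen_id
    show ?case by (rule gen_by.gen_id)
  next
    case (gen_step s g)
    then show ?case
      using aff_refl_in_gen_by gen_by_comp by blast
  qed
qed

section \<open>Maximal elements of the cosets of the finite Weyl group\<close>

definition chamber_ineqs :: "((real^2) \<times> real) set" where
  "chamber_ineqs = (\<lambda>b. (- b, 0)) ` pos_roots R xi"

lemma mem_chamber_iff: "v \<in> halfspaces_lt chamber_ineqs \<longleftrightarrow> (\<forall>b\<in>pos_roots R xi. 0 < v \<bullet> b)"
  by (auto simp: halfspaces_lt_def chamber_ineqs_def)

lemma chamber_cone:
  "v \<in> halfspaces_lt chamber_ineqs \<Longrightarrow> l > 0 \<Longrightarrow> l *\<^sub>R v \<in> halfspaces_lt chamber_ineqs"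
  by (simp add: mem_chamber_iff)

lemma chamber_near_0_subset_A0:
  obtains r where "r > 0" "\<And>v. v \<in> halfspaces_lt chamber_ineqs \<Longrightarrow> norm v < r \<Longrightarrow> v \<in> A0 R xi"
proof -
  define N where "N = (\<Sum>b\<in>R. norm b) + 1"
  have N: "N > 0" "\<And>b. b \<in> R \<Longrightarrow> norm b \<le> N"
  proof -
    show "N > 0"
      by (simp add: N_def add_nonneg_pos sum_nonneg)
    show "norm b \<le> N" if "b \<in> R" for b
      using member_le_sum[of b R norm] finite_roots that unfolding N_def by simp
  qed
  have "v \<in> A0 R xi" if v: "v \<in> halfspaces_lt chamber_ineqs" "norm v < 1 / N" for v
    unfolding mem_A0_iff
  proof (intro ballI impI conjI)
    fix b assume "b \<in> R" "b \<bullet> xi > 0"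
    then show "0 < v \<bullet> b"
      using v(1) by (simp add: mem_chamber_iff pos_roots_def)
    have "v \<bullet> b \<le> norm v * norm b"
      using Cauchy_Schwarz_ineq2[of v b] by linarith
    also have "\<dots> \<le> norm v * N"
      using N(2)[OF \<open>b \<in> R\<close>] by (simp add: mult_left_mono)
    also have "\<dots> < 1"
      using v(2) N(1) by (simp add: field_simps)
    finally show "v \<bullet> b < 1" .
  qed
  then show ?thesis
    using that[of "1 / N"] N(1) by simp
qed

lemma is_wall_A0_if_chamber_facet:
  assumes facet: "has_facet (halfspaces_lt chamber_ineqs) (c, 0)"
  shows "is_wall (A0 R xi) c 0"
proof -
  obtain p e where pe: "p \<bullet> c = 0" "e > 0"
    and half: "{v \<in> ball p e. v \<bullet> c < 0} \<subseteq> halfspaces_lt chamber_ineqs"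
    using facet by (auto simp: has_facet_def)
  obtain r where r: "r > 0" "\<And>v. v \<in> halfspaces_lt chamber_ineqs \<Longrightarrow> norm v < r \<Longrightarrow> v \<in> A0 R xi"
    using chamber_near_0_subset_A0 by blast
  define l where "l = r / (norm p + e)"
  have "norm p + e > 0"
    using pe(2) by (simp add: add_nonneg_pos)
  then have l: "l > 0" "l * (norm p + e) = r"
    using r(1) by (simp_all add: l_def)
  have "{v \<in> ball (l *\<^sub>R p) (l * e). v \<bullet> c < 0} \<subseteq> A0 R xi"
  proof
    fix v assume v: "v \<in> {v \<in> ball (l *\<^sub>R p) (l * e). v \<bullet> c < 0}"
    define u where "u = (1 / l) *\<^sub>R v"
    have vu: "v = l *\<^sub>R u"
      using l(1) by (simp add: u_def)
    have "dist p u < e"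
      using v l(1) by (simp add: vu dist_norm scaleR_diff_right[symmetric])
    moreover have "u \<bullet> c < 0"
      using v l(1) by (simp add: vu zero_less_mult_iff mult_less_0_iff)
    ultimately have "u \<in> halfspaces_lt chamber_ineqs"
      using half by auto
    then have "v \<in> halfspaces_lt chamber_ineqs"
      unfolding vu using l(1) by (rule chamber_cone)
    moreover have "norm v < r"
    proof -
      have "norm v \<le> norm (l *\<^sub>R p) + dist (l *\<^sub>R p) v"
        by (metis dist_0_norm dist_triangle dist_commute)
      also have "\<dots> < l * norm p + l * e"
        using v l(1) by simp
      finally show ?thesis
        using l(2) by (simp add: distrib_left)
    qed
    ultimately show "v \<in> A0 R xi"
      by (rule r(2))
  qed
  then show ?thesis
    unfolding is_wall_def using pe l(1)
    by (intro exI[of _ "l *\<^sub>R p"] exI[of _ "l * e"]) simp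
qed

lemma chamber_walls:
  obtains F where "F \<subseteq> pos_roots R xi" "\<And>b. b \<in> F \<Longrightarrow> is_wall (A0 R xi) (- b) 0"
    "\<And>v. \<forall>b\<in>F. 0 \<le> v \<bullet> b \<Longrightarrow> \<forall>b\<in>pos_roots R xi. 0 \<le> v \<bullet> b"
proof -
  have "xi \<in> halfspaces_lt chamber_ineqs"
    by (simp add: mem_chamber_iff pos_roots_def inner_commute)
  moreover have "\<forall>h\<in>chamber_ineqs. fst h \<noteq> 0"
    by (auto simp: chamber_ineqs_def pos_roots_def root_nonzero)
  moreover have "finite chamber_ineqs"
    using finite_roots by (simp add: chamber_ineqs_def pos_roots_def)
  ultimately obtain F' where F': "F' \<subseteq> chamber_ineqs"
    "halfspaces_le F' \<subseteq> halfspaces_le chamber_ineqs"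
    "\<And>h. h \<in> F' \<Longrightarrow> has_facet (halfspaces_lt chamber_ineqs) h"
    using irredundant_subsystem by metis
  define F where "F = {b \<in> pos_roots R xi. (- b, 0) \<in> F'}"
  have F'_eq: "F' = (\<lambda>b. (- b, 0)) ` F"
    using F'(1) by (auto simp: F_def chamber_ineqs_def)
  show ?thesis
  proof (rule that)
    show "F \<subseteq> pos_roots R xi"
      by (auto simp: F_def)
    show "is_wall (A0 R xi) (- b) 0" if "b \<in> F" for b
      using that F'(3) is_wall_A0_if_chamber_facet by (auto simp: F_def)
    show "\<forall>b\<in>pos_roots R xi. 0 \<le> v \<bullet> b" if "\<forall>b\<in>F. 0 \<le> v \<bullet> b" for v
    proof -
      have "v \<in> halfspaces_le F'"
        using that by (auto simp: F'_eq halfspaces_le_def)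
      then show ?thesis
        using F'(2) by (auto simp: halfspaces_le_def chamber_ineqs_def)
    qed
  qed
qed

lemma wall_hyp_separates_if_maximal:
  assumes w: "w \<in> gen_by (simple_gens R xi)"
    and maximal: "\<forall>u\<in>W0 R xi. clen R xi (w \<circ> u) \<le> clen R xi w"
    and c: "c \<in> R" and wall: "is_wall (A0 R xi) c 0"
  shows "hyp_image w (c, 0) \<in> inversions w"
proof (rule ccontr)
  assume notin: "hyp_image w (c, 0) \<notin> inversions w"
  have "aff_refl c 0 \<in> {aff_refl b 0 | b. b \<in> R \<and> is_wall (A0 R xi) b 0}"
    using c wall by blast
  then have "aff_refl c 0 \<in> W0 R xi"
    unfolding W0_def by (rule gen_by_generator)
  then have "clen R xi (w \<circ> aff_refl c 0) \<le> clen R xi w"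
    using maximal by blast
  moreover have "clen R xi (w \<circ> aff_refl c 0) = clen R xi w + 1"
    using clen_comp_wall_refl[OF w c wall] notin by simp
  ultimately show False by simp
qed

lemma A0_above_wall_image_if_maximal:
  assumes w: "w \<in> gen_by (simple_gens R xi)"
    and maximal: "\<forall>u\<in>W0 R xi. clen R xi (w \<circ> u) \<le> clen R xi w"
    and b: "b \<in> pos_roots R xi" and wall: "is_wall (A0 R xi) (- b) 0"
  shows "hyp_above (A0 R xi) (hyp_image w (- b, 0))"
proof -
  have ws: "hyp_symmetry R w"
    using hyp_symmetry_gen_by[OF w] .
  have b': "b \<in> R" "b \<bullet> xi > 0"
    using b by (auto simp: pos_roots_def)
  let ?H = "hyp_image w (- b, 0)"
  have "hyp_below (A0 R xi) (- b, 0)"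
    using A0_inner_bounds(1)[OF _ b'] by (auto simp: hyp_below_def)
  then have below: "hyp_below (w ` A0 R xi) ?H"
    by (simp add: hyp_below_image[OF ws])
  have "w ` A0 R xi \<noteq> {}"
    using A0_nonempty by simp
  then have "\<not> hyp_above (w ` A0 R xi) ?H"
    using below by (rule not_hyp_below_and_above)
  moreover have "?H \<in> inversions w"
    using wall_hyp_separates_if_maximal[OF w maximal root_uminus[OF b'(1)] wall] .
  then have "separates ?H (A0 R xi) (w ` A0 R xi)"
    unfolding sep_hyps_def by blast
  ultimately show ?thesis
    unfolding separates_def by blast
qed

lemma positive_preimage_root:
  assumes ws: "hyp_symmetry R w" and a: "a \<in> R"
    and above: "hyp_above (w ` A0 R xi) (a, w 0 \<bullet> a)"
  obtains a' where "a' \<in> pos_roots R xi" "lin_part w a' = a"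
proof -
  have "a \<in> lin_part w ` R"
    using ws a by (simp add: hyp_symmetry_def)
  then obtain a' where a': "a' \<in> R" "a = lin_part w a'"
    by blast
  obtain \<epsilon> where \<epsilon>: "\<epsilon> > 0" "\<And>t. 0 < t \<Longrightarrow> t \<le> \<epsilon> \<Longrightarrow> t *\<^sub>R xi \<in> A0 R xi"
    using A0_ray by blast
  have "w (\<epsilon> *\<^sub>R xi) \<bullet> a > w 0 \<bullet> a"
    using above \<epsilon> by (simp add: hyp_above_def)
  then have "lin_part w (\<epsilon> *\<^sub>R xi) \<bullet> lin_part w a' > 0"
    using lin_part_decomp[of w "\<epsilon> *\<^sub>R xi"] a'(2) by (simp add: inner_add_left)
  then have "a' \<in> pos_roots R xi"
    using a'(1) \<epsilon>(1)
    by (simp add: hyp_symmetry_inner[OF ws] pos_roots_def inner_commute zero_less_mult_iff)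
  with a'(2) show ?thesis
    using that by blast
qed

lemma not_maximal_if_vertex_hyp_above:
  assumes w: "w \<in> gen_by (simple_gens R xi)" and a: "a \<in> R"
    and above: "hyp_above (A0 R xi) (a, w 0 \<bullet> a)" "hyp_above (w ` A0 R xi) (a, w 0 \<bullet> a)"
  shows "\<exists>u\<in>W0 R xi. clen R xi (w \<circ> u) > clen R xi w"
proof (rule ccontr)
  assume "\<not> ?thesis"
  then have maximal: "\<forall>u\<in>W0 R xi. clen R xi (w \<circ> u) \<le> clen R xi w"
    by (meson not_le)
  have ws: "hyp_symmetry R w"
    using hyp_symmetry_gen_by[OF w] .
  let ?L = "lin_part w"
  obtain F where F: "F \<subseteq> pos_roots R xi" "\<And>b. b \<in> F \<Longrightarrow> is_wall (A0 R xi) (- b) 0"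
    "\<And>v. \<forall>b\<in>F. 0 \<le> v \<bullet> b \<Longrightarrow> \<forall>b\<in>pos_roots R xi. 0 \<le> v \<bullet> b"
    using chamber_walls by blast
  obtain x where x: "x \<in> A0 R xi"
    using A0_nonempty by blast
  obtain z where "w z = x"
    using hyp_symmetry_surj[OF ws] by (metis surjD)
  then have z: "?L z = x - w 0"
    by (simp add: lin_part_def)
  have "0 \<le> (- z) \<bullet> b" if b: "b \<in> F" for b
  proof -
    have "hyp_above (A0 R xi) (hyp_image w (- b, 0))"
      using A0_above_wall_image_if_maximal[OF w maximal _ F(2)[OF b]] b F(1) by blast
    then have "(x - w 0) \<bullet> ?L (- b) > 0"
      using x by (simp add: hyp_above_def hyp_image_def inner_diff_left)
    then show ?thesis
      using hyp_symmetry_inner[OF ws, of z "- b"] z by simp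
  qed
  then have nonneg: "\<forall>b\<in>pos_roots R xi. 0 \<le> (- z) \<bullet> b"
    using F(3) by blast
  obtain a' where a': "a' \<in> pos_roots R xi" "?L a' = a"
    using positive_preimage_root[OF ws a above(2)] .
  have "0 \<le> (- z) \<bullet> a'"
    using nonneg a'(1) by blast
  moreover have "(- z) \<bullet> a' = - ((x - w 0) \<bullet> a)"
    using hyp_symmetry_inner[OF ws, of z a'] z a'(2) by simp
  moreover have "(x - w 0) \<bullet> a > 0"
    using above(1) x by (simp add: hyp_above_def inner_diff_left)
  ultimately show False
    by linarith
qed

lemma not_maximal_if_vertex_hyp_not_separating:
  assumes w: "w \<in> gen_by (simple_gens R xi)" and a: "a \<in> R"
    and not_sep: "\<not> separates (a, w 0 \<bullet> a) (A0 R xi) (w ` A0 R xi)"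
  shows "\<exists>u\<in>W0 R xi. clen R xi (w \<circ> u) > clen R xi w"
proof -
  have ws: "hyp_symmetry R w"
    using hyp_symmetry_gen_by[OF w] .
  have h: "(a, w 0 \<bullet> a) \<in> hyps R"
    using a ws by (simp add: hyps_def hyp_symmetry_def)
  have "hyp_above (A0 R xi) (a, w 0 \<bullet> a) \<and> hyp_above (w ` A0 R xi) (a, w 0 \<bullet> a)
      \<or> hyp_above (A0 R xi) (- a, w 0 \<bullet> - a) \<and> hyp_above (w ` A0 R xi) (- a, w 0 \<bullet> - a)"
    using not_sep A0_one_side[OF h] image_A0_one_side[OF ws h]
      hyp_above_uminus[of _ "(a, w 0 \<bullet> a)"]
    by (auto simp: separates_def)
  then show ?thesis
    using not_maximal_if_vertex_hyp_above[OF w] a root_uminus by blast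
qed

lemma vertex_in_closed_strip:
  assumes ws: "hyp_symmetry R w" and strip: "w ` A0 R xi \<subseteq> strip a c"
  shows "of_int c \<le> w 0 \<bullet> a" "w 0 \<bullet> a \<le> of_int c + 1"
proof -
  obtain \<epsilon> where \<epsilon>: "\<epsilon> > 0" "\<And>t. 0 < t \<Longrightarrow> t \<le> \<epsilon> \<Longrightarrow> t *\<^sub>R xi \<in> A0 R xi"
    using A0_ray by blast
  have ray: "w (t *\<^sub>R xi) \<bullet> a = w 0 \<bullet> a + t * (lin_part w xi \<bullet> a)" for t
    using lin_part_decomp[of w "t *\<^sub>R xi"] linear_scale[OF hyp_symmetry_linear[OF ws]]
    by (simp add: inner_add_left)
  have in_strip: "of_int c < w (t *\<^sub>R xi) \<bullet> a \<and> w (t *\<^sub>R xi) \<bullet> a < of_int c + 1"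
    if "0 < t" "t \<le> \<epsilon>" for t
    using strip \<epsilon>(2)[OF that] by (auto simp: strip_def)
  show "of_int c \<le> w 0 \<bullet> a"
  proof (rule affine_lower_bound_at_0[OF \<epsilon>(1), where \<beta> = "lin_part w xi \<bullet> a"])
    fix t :: real assume "0 < t" "t \<le> \<epsilon>"
    then show "of_int c < w 0 \<bullet> a + t * (lin_part w xi \<bullet> a)"
      using in_strip[of t] unfolding ray by linarith
  qed
  have "- (of_int c + 1) \<le> - (w 0 \<bullet> a)"
  proof (rule affine_lower_bound_at_0[OF \<epsilon>(1), where \<beta> = "- (lin_part w xi \<bullet> a)"])
    fix t :: real assume "0 < t" "t \<le> \<epsilon>"
    then show "- (of_int c + 1) < - (w 0 \<bullet> a) + t * - (lin_part w xi \<bullet> a)"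
      using in_strip[of t] unfolding ray by linarith
  qed
  then show "w 0 \<bullet> a \<le> of_int c + 1"
    by simp
qed

end

lemma strip_not_separated:
  assumes "A \<noteq> {}" "B \<noteq> {}" "A \<subseteq> strip a c" "B \<subseteq> strip a c" "j = c \<or> j = c + 1"
  shows "\<not> separates (a, of_int j) A B"
proof -
  have "hyp_above A (a, of_int j) \<and> hyp_above B (a, of_int j)
      \<or> hyp_below A (a, of_int j) \<and> hyp_below B (a, of_int j)"
    using assms(3-5) by (auto simp: strip_def hyp_above_def hyp_below_def)
  then show ?thesis
    using not_hyp_below_and_above[OF assms(1)] not_hyp_below_and_above[OF assms(2)]
    unfolding separates_def by blast
qed

theorem lemma4p39:
  fixes R :: "(real^2) set" and xi :: "real^2" and w :: "real^2 \<Rightarrow> real^2"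
    and a :: "real^2" and c :: int
  assumes "root_system R" and "reduced_rs R" and "irreducible_rs R"
    and "\<forall>b\<in>R. b \<bullet> xi \<noteq> 0"
    and "w \<in> affW R"
    and "a \<in> R"
    and "A0 R xi \<subseteq> strip a c"
    and "w ` A0 R xi \<subseteq> strip a c"
  shows "\<not> (\<forall>u\<in>W0 R xi. clen R xi (w \<circ> u) \<le> clen R xi w)"
proof -
  interpret affine_weyl R xi
    using assms(1,2,4) by unfold_locales
  have w: "w \<in> gen_by (simple_gens R xi)"
    using assms(5) affW_subset_gen_by by blast
  have ws: "hyp_symmetry R w"
    using hyp_symmetry_gen_by[OF w] .
  have "w 0 \<bullet> a \<in> \<int>"
    using ws assms(6) by (simp add: hyp_symmetry_def)
  then obtain n where n: "w 0 \<bullet> a = of_int n"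
    using Ints_cases by blast
  have "n = c \<or> n = c + 1"
    using vertex_in_closed_strip[OF ws assms(8)] unfolding n by linarith
  then have "\<not> separates (a, w 0 \<bullet> a) (A0 R xi) (w ` A0 R xi)"
    unfolding n using A0_nonempty assms(7,8) by (intro strip_not_separated) auto
  then show ?thesis
    using not_maximal_if_vertex_hyp_not_separating[OF w assms(6)] by (meson not_le)
qed

end
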